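(* Assume the setting described in the context, assume for all $x\in[a,b]^{\ell_0}$ that $f(x)=f(0)$, let $(\gamma_n)_{n\in\mathbb N_0}\subseteq[0,\infty)$, let $(\Theta_n)_{n\in\mathbb N_0}\colon\mathbb N_0\to\mathbb R^{\mathfrak d}$ satisfy for all $n\in\mathbb N_0$ that $\Theta_{n+1}=\Theta_n-\gamma_n\mathcal G(\Theta_n)$, and assume $\sum_{n=0}^\infty\gamma_n=\infty$ and $$\sup_{n\in\mathbb N_0}(\gamma_n\mathfrak m)<\Big(L\mathbf a^2\Big[\prod_{p=0}^L(\ell_p+1)\Big](2V(\Theta_0)+4L^2\|f(0)\|^2+1)^{L-1}\Big)^{-1}.$$ Then (i) $\sup_{n\in\mathbb N_0}\|\Theta_n\|\le[2V(\Theta_0)+4L^2\|f(0)\|^2]^{1/2}<\infty$ and (ii) $\limsup_{n\to\infty}\mathcal L_\infty(\Theta_n)=0$.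
   Context: Setting. Let $L,\mathfrak d\in\mathbb N=\{1,2,\dots\}$, $(\ell_k)_{k\in\mathbb N_0}\subseteq\mathbb N$, $a\in\mathbb R$, $b\in(a,\infty)$, $\mathscr A\in(0,\infty)$, $\mathscr B\in(\mathscr A,\infty)$ with $\mathfrak d=\sum_{k=1}^L\ell_k(\ell_{k-1}+1)$; let $\mathbf a=\max\{|a|,|b|,1\}$ and $\mathbf d_k=\sum_{h=1}^k\ell_h(\ell_{h-1}+1)$ for $k\in\mathbb N_0$. For $\theta=(\theta_1,\dots,\theta_{\mathfrak d})\in\mathbb R^{\mathfrak d}$, $k\in\{1,\dots,L\}$, $i\in\{1,\dots,\ell_k\}$, $j\in\{1,\dots,\ell_{k-1}\}$ let $\mathfrak w^{k,\theta}_{i,j}=\theta_{(i-1)\ell_{k-1}+j+\mathbf d_{k-1}}$ and $\mathfrak b^{k,\theta}_i=\theta_{\ell_k\ell_{k-1}+i+\mathbf d_{k-1}}$, let $\mathfrak w^{k,\theta}=(\mathfrak w^{k,\theta}_{i,j})_{i,j}\in\mathbb R^{\ell_k\times\ell_{k-1}}$, $\mathfrak b^{k,\theta}=(\mathfrak b^{k,\theta}_1,\dots,\mathfrak b^{k,\theta}_{\ell_k})\in\mathbb R^{\ell_k}$, and $\mathcal A^\theta_k\colon\mathbb R^{\ell_{k-1}}\to\mathbb R^{\ell_k}$, $\mathcal A^\theta_k(x)=\mathfrak b^{k,\theta}+\mathfrak w^{k,\theta}x$. Let $\mathscr R_\infty(x)=\max\{x,0\}$ and let $\mathscr R_r\colon\mathbb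 R\to\mathbb R$, $r\in[1,\infty)$, satisfy for all $r\in[1,\infty)$: $\mathscr R_r\in C^1(\mathbb R,\mathbb R)$, $\mathscr R_r(x)=0$ for all $x\le\mathscr A r^{-1}$, $0\le\mathscr R_r(y)\le\max\{y,0\}$ for all $y\in\mathbb R$, $\mathscr R_r(z)=z$ for all $z\ge\mathscr B r^{-1}$; assume $\sup_{r\in[1,\infty)}\sup_{x\in\mathbb R}|(\mathscr R_r)'(x)|<\infty$. $\|\cdot\|$, $\langle\cdot,\cdot\rangle$ are the Euclidean norm and scalar product on each $\mathbb R^n$; for $r\in[1,\infty]$, $\mathfrak M_r(x_1,\dots,x_n)=(\mathscr R_r(x_1),\dots,\mathscr R_r(x_n))$. For $r\in[1,\infty]$, $\theta\in\mathbb R^{\mathfrak d}$ define $\mathcal N^{k,\theta}_r\colon\mathbb R^{\ell_0}\to\mathbb R^{\ell_k}$, $k\in\{1,\dots,L\}$, by $\mathcal N^{1,\theta}_r=\mathcal A^\theta_1$ and $\mathcal N^{k+1,\theta}_r(x)=\mathcal A^\theta_{k+1}(\mathfrak M_{r^{1/k}}(\mathcal N^{k,\theta}_r(x)))$ (with $\infty^{1/k}=\infty$). Let $\mu$ be a measure on the Borel $\sigma$-algebra of $[a,b]^{\ell_0}$ with $\mathfrak m=\mu([a,b]^{\ell_0})\in\mathbb R$, let $f=(f_1,\dots,f_{\ell_L})\colon\mathbb R^{\ell_0}\to\mathbb R^{\ell_L}$ be measurable (only its values on $[a,b]^{\ell_0}$ and the value $f(0)$ enter), and for $r\in[1,\infty]$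 let $\mathcal L_r\colon\mathbb R^{\mathfrak d}\to\mathbb R$ be given by $\mathcal L_r(\theta)=\int_{[a,b]^{\ell_0}}\|\mathcal N^{L,\theta}_r(x)-f(x)\|^2\,\mu(dx)$ (these integrals are real numbers as part of the setting). Let $\mathcal G\colon\mathbb R^{\mathfrak d}\to\mathbb R^{\mathfrak d}$ satisfy $\mathcal G(\theta)=\lim_{r\to\infty}(\nabla\mathcal L_r)(\theta)$ for every $\theta$ for which $((\nabla\mathcal L_r)(\theta))_{r\in[1,\infty)}$ is convergent as $r\to\infty$. Let $V\colon\mathbb R^{\mathfrak d}\to\mathbb R$, $V(\theta)=\big[\sum_{k=1}^L\big(k\|\mathfrak b^{k,\theta}\|^2+\sum_{i=1}^{\ell_k}\sum_{j=1}^{\ell_{k-1}}|\mathfrak w^{k,\theta}_{i,j}|^2\big)\big]-2L\langle f(0),\mathfrak b^{L,\theta}\rangle$. *)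

theory Defs
  imports "HOL-Analysis.Analysis"
begin

text \<open>Parameter vectors theta in R^d are elements of real^'n, where the coordinate
  theta_i (i = 1..d) is theta $ idx i for a fixed bijection idx : {1..d} -> 'n.
  Inputs x in R^(l_0) are elements of real^'m, with x_j = x $ idx0 j.
  Vectors in R^(l_k) (k >= 1) are functions nat => real, meaningful on {1..l_k}.\<close>

definition dd :: "(nat \<Rightarrow> nat) \<Rightarrow> nat \<Rightarrow> nat" where
  "dd ls k = (\<Sum>h=1..k. ls h * (ls (h - 1) + 1))"

definition wt :: "(nat \<Rightarrow> nat) \<Rightarrow> (nat \<Rightarrow> 'n) \<Rightarrow> real^'n \<Rightarrow> nat \<Rightarrow> nat \<Rightarrow> nat \<Rightarrow> real" where
  "wt ls idx \<theta> k i j = \<theta> $ idx ((i - 1) * ls (k - 1) + j + dd ls (k - 1))"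

definition bs :: "(nat \<Rightarrow> nat) \<Rightarrow> (nat \<Rightarrow> 'n) \<Rightarrow> real^'n \<Rightarrow> nat \<Rightarrow> nat \<Rightarrow> real" where
  "bs ls idx \<theta> k i = \<theta> $ idx (ls k * ls (k - 1) + i + dd ls (k - 1))"

fun net :: "(nat \<Rightarrow> nat) \<Rightarrow> (nat \<Rightarrow> 'n) \<Rightarrow> (nat \<Rightarrow> 'm) \<Rightarrow> (nat \<Rightarrow> real \<Rightarrow> real)
            \<Rightarrow> real^'n \<Rightarrow> nat \<Rightarrow> real^'m \<Rightarrow> nat \<Rightarrow> real" where
  "net ls idx idx0 act \<theta> 0 x = (\<lambda>_. 0)"
| "net ls idx idx0 act \<theta> (Suc 0) x =
     (\<lambda>i. bs ls idx \<theta> 1 i + (\<Sum>j=1..ls 0. wt ls idx \<theta> 1 i j * x $ idx0 j))"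
| "net ls idx idx0 act \<theta> (Suc (Suc k)) x =
     (\<lambda>i. bs ls idx \<theta> (Suc (Suc k)) i +
          (\<Sum>j=1..ls (Suc k). wt ls idx \<theta> (Suc (Suc k)) i j
                 * act (Suc k) (net ls idx idx0 act \<theta> (Suc k) x j)))"

definition act_r :: "(real \<Rightarrow> real \<Rightarrow> real) \<Rightarrow> real \<Rightarrow> nat \<Rightarrow> real \<Rightarrow> real" where
  "act_r R r k = R (r powr (1 / real k))"

definition act_inf :: "nat \<Rightarrow> real \<Rightarrow> real" where
  "act_inf k = (\<lambda>x. max x 0)"

definition err :: "(nat \<Rightarrow> nat) \<Rightarrow> nat \<Rightarrow> (nat \<Rightarrow> 'n) \<Rightarrow> (nat \<Rightarrow> 'm) \<Rightarrow> (nat \<Rightarrow> real \<Rightarrow> real)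
            \<Rightarrow> (real^'m \<Rightarrow> nat \<Rightarrow> real) \<Rightarrow> real^'n \<Rightarrow> real^'m \<Rightarrow> real" where
  "err ls L idx idx0 act f \<theta> x = (\<Sum>i=1..ls L. (net ls idx idx0 act \<theta> L x i - f x i)\<^sup>2)"

definition loss :: "(real^'m) measure \<Rightarrow> (nat \<Rightarrow> nat) \<Rightarrow> nat \<Rightarrow> (nat \<Rightarrow> 'n) \<Rightarrow> (nat \<Rightarrow> 'm)
            \<Rightarrow> (nat \<Rightarrow> real \<Rightarrow> real) \<Rightarrow> (real^'m \<Rightarrow> nat \<Rightarrow> real) \<Rightarrow> real^'n \<Rightarrow> real" where
  "loss \<mu> ls L idx idx0 act f \<theta> = (\<integral>x. err ls L idx idx0 act f \<theta> x \<partial>\<mu>)"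

definition Vfun :: "(nat \<Rightarrow> nat) \<Rightarrow> nat \<Rightarrow> (nat \<Rightarrow> 'n) \<Rightarrow> (nat \<Rightarrow> real) \<Rightarrow> real^'n \<Rightarrow> real" where
  "Vfun ls L idx f0 \<theta> =
     (\<Sum>k=1..L. real k * (\<Sum>i=1..ls k. (bs ls idx \<theta> k i)\<^sup>2)
                + (\<Sum>i=1..ls k. \<Sum>j=1..ls (k - 1). (wt ls idx \<theta> k i j)\<^sup>2))
     - 2 * real L * (\<Sum>i=1..ls L. f0 i * bs ls idx \<theta> L i)"

end

theory Submission
  imports Defs
begin

text \<open>The proof is a Lyapunov argument for \<open>V\<close>. Write \<open>E\<close> for the ReLU loss and \<open>m\<close> for the total mass of
  \<open>\<mu>\<close>. The generalized gradient \<open>G\<close>, the limit of the gradients of the smoothed losses, is computed by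
  the chain rule through ReLU with derivative \<open>0\<close> at \<open>0\<close>. Since the ReLU network is positively
  homogeneous and the target is constant on the data, Euler's identity gives
  \<open>\<langle>G \<theta>, \<nabla>V \<theta>\<rangle> = 4 L E(\<theta>)\<close>, while Cauchy-Schwarz gives \<open>\<bar>G \<theta>\<bar>\<^sup>2 \<le> 4 m E(\<theta>) K(\<theta>)\<close> with \<open>K\<close>
  polynomial in \<open>\<bar>\<theta>\<bar>\<close>. Hence for small steps \<open>V(\<Theta>(n+1)) \<le> V(\<Theta> n) - c \<gamma> n E(\<Theta> n)\<close>; as \<open>V\<close>
  controls \<open>\<bar>\<theta>\<bar>\<^sup>2\<close>, the iterates stay in a ball and \<open>\<Sum>n. \<gamma> n E(\<Theta> n) < \<infinity>\<close>. The loss is Lipschitz on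
  that ball, so its increments are \<open>O(\<gamma> n E(\<Theta> n))\<close> and \<open>E(\<Theta> n)\<close> converges; since \<open>\<Sum>n. \<gamma> n = \<infinity>\<close>,
  the limit is \<open>0\<close>.\<close>

section \<open>Layout of the parameter vector\<close>

lemma sum_atLeastAtMost_shift: "(\<Sum>p\<in>{d+1..d+s}. g p) = (\<Sum>i=1..s. g (i + d))" for d s :: nat
  using sum.shift_bounds_cl_nat_ivl[of g 1 d s] by (simp add: add.commute)

lemma sum_row_major: "(\<Sum>q=1..n*m. g q) = (\<Sum>i=1..n. \<Sum>j=1..m. g ((i - 1) * m + j))" for n m :: nat
proof (induction n)
  case (Suc n)
  have "{1..Suc n * m} = {1..n*m} \<union> {n*m+1..n*m+m}" by auto
  then have "(\<Sum>q=1..Suc n * m. g q) = (\<Sum>q=1..n*m. g q) + (\<Sum>q\<in>{n*m+1..n*m+m}. g q)"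
    by (simp add: sum.union_disjoint[symmetric] ivl_disj_int)
  also have "(\<Sum>q\<in>{n*m+1..n*m+m}. g q) = (\<Sum>j=1..m. g (j + n*m))" by (rule sum_atLeastAtMost_shift)
  finally show ?case using Suc by (simp add: add.commute)
qed simp

lemma dd_0 [simp]: "dd ls 0 = 0"
  by (simp add: dd_def)

lemma dd_Suc: "dd ls (Suc k) = dd ls k + ls (Suc k) * (ls k + 1)"
  by (simp add: dd_def)

lemma dd_pred: "k \<ge> 1 \<Longrightarrow> dd ls k = dd ls (k - 1) + ls k * (ls (k - 1) + 1)"
  using dd_Suc[of ls "k - 1"] by simp

lemma dd_mono: "k \<le> k' \<Longrightarrow> dd ls k \<le> dd ls k'"
  unfolding dd_def by (rule sum_mono2) auto

lemma sum_params_by_layer: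
  "(\<Sum>p=1..dd ls K. g p) =
     (\<Sum>k=1..K. (\<Sum>i=1..ls k. \<Sum>j=1..ls (k - 1). g ((i - 1) * ls (k - 1) + j + dd ls (k - 1)))
              + (\<Sum>i=1..ls k. g (ls k * ls (k - 1) + i + dd ls (k - 1))))"
proof (induction K)
  case (Suc K)
  let ?d = "dd ls K" and ?n = "ls (Suc K)" and ?m = "ls K"
  have "{1..dd ls (Suc K)} = {1..?d} \<union> {?d+1..?d+?n*?m} \<union> {?d+?n*?m+1..?d+?n*?m+?n}"
    by (auto simp: dd_Suc algebra_simps)
  then have "(\<Sum>p=1..dd ls (Suc K). g p)
      = (\<Sum>p=1..?d. g p) + (\<Sum>p\<in>{?d+1..?d+?n*?m}. g p) + (\<Sum>p\<in>{?d+?n*?m+1..?d+?n*?m+?n}. g p)"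
    by (simp only:) (subst sum.union_disjoint; auto)+
  also have "(\<Sum>p\<in>{?d+1..?d+?n*?m}. g p) = (\<Sum>i=1..?n. \<Sum>j=1..?m. g ((i - 1) * ?m + j + ?d))"
    by (simp only: sum_atLeastAtMost_shift sum_row_major)
  also have "(\<Sum>p\<in>{?d+?n*?m+1..?d+?n*?m+?n}. g p) = (\<Sum>i=1..?n. g (i + (?d + ?n*?m)))"
    using sum_atLeastAtMost_shift[where d="?d+?n*?m" and s="?n" and g=g] by (simp add: add.assoc)
  finally show ?case using Suc by (simp add: algebra_simps)
qed simp

definition layer_sqnorm :: "(nat \<Rightarrow> nat) \<Rightarrow> (nat \<Rightarrow> 'n) \<Rightarrow> real^'n \<Rightarrow> nat \<Rightarrow> real" where
  "layer_sqnorm ls idx \<theta> k =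
     (\<Sum>i=1..ls k. (bs ls idx \<theta> k i)\<^sup>2) + (\<Sum>i=1..ls k. \<Sum>j=1..ls (k - 1). (wt ls idx \<theta> k i j)\<^sup>2)"

lemma layer_sqnorm_nonneg: "layer_sqnorm ls idx \<theta> k \<ge> 0"
  unfolding layer_sqnorm_def by (intro add_nonneg_nonneg sum_nonneg) auto

lemma weights_sq_le_layer_sqnorm:
  "(\<Sum>i=1..ls k. \<Sum>j=1..ls (k - 1). (wt ls idx \<theta> k i j)\<^sup>2) \<le> layer_sqnorm ls idx \<theta> k"
  unfolding layer_sqnorm_def by (auto intro!: sum_nonneg)

lemma inner_eq_sum_layers:
  assumes "bij_betw idx {1..dd ls L} (UNIV :: 'n::finite set)"
  shows "(u::real^'n) \<bullet> w =
           (\<Sum>k=1..L. (\<Sum>i=1..ls k. bs ls idx u k i * bs ls idx w k i)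
                    + (\<Sum>i=1..ls k. \<Sum>j=1..ls (k - 1). wt ls idx u k i j * wt ls idx w k i j))"
proof -
  have "u \<bullet> w = (\<Sum>c\<in>UNIV. u $ c * w $ c)" unfolding inner_vec_def by simp
  also have "\<dots> = (\<Sum>p=1..dd ls L. u $ idx p * w $ idx p)"
    using sum.reindex_bij_betw[OF assms, of "\<lambda>c. u $ c * w $ c"] by simp
  finally show ?thesis
    by (subst (asm) sum_params_by_layer) (simp add: wt_def bs_def add.commute)
qed

lemma norm_sq_eq_sum_layer_sqnorm:
  assumes "bij_betw idx {1..dd ls L} (UNIV :: 'n::finite set)"
  shows "(norm (\<theta>::real^'n))\<^sup>2 = (\<Sum>k=1..L. layer_sqnorm ls idx \<theta> k)"
  unfolding power2_norm_eq_inner inner_eq_sum_layers[OF assms] layer_sqnorm_def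
  by (simp add: power2_eq_square)

lemma layer_sqnorm_le_norm_sq:
  assumes "bij_betw idx {1..dd ls L} (UNIV :: 'n::finite set)" "k \<in> {1..L}"
  shows "layer_sqnorm ls idx (\<theta>::real^'n) k \<le> (norm \<theta>)\<^sup>2"
  unfolding norm_sq_eq_sum_layer_sqnorm[OF assms(1)]
  by (rule member_le_sum) (use assms layer_sqnorm_nonneg in auto)

lemma layer_sqnorm_le_radius:
  assumes "bij_betw idx {1..dd ls L} (UNIV :: 'n::finite set)" "k \<in> {1..L}" "norm (\<theta>::real^'n) \<le> \<rho>"
  shows "layer_sqnorm ls idx \<theta> k \<le> \<rho>\<^sup>2"
  using layer_sqnorm_le_norm_sq[OF assms(1,2), of \<theta>] assms(3) norm_ge_zero power_mono by (blast intro: order_trans)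

lemma bs_diff: "bs ls idx (x - y) k i = bs ls idx x k i - bs ls idx y k i"
  and bs_scaleR: "bs ls idx (c *\<^sub>R x) k i = c * bs ls idx x k i"
  and wt_diff: "wt ls idx (x - y) k i j = wt ls idx x k i j - wt ls idx y k i j"
  and wt_scaleR: "wt ls idx (c *\<^sub>R x) k i j = c * wt ls idx x k i j"
  by (simp_all add: bs_def wt_def)

section \<open>Bounds on the network and on its parameter derivative\<close>

lemma two_mult_le_of_sq_le:
  fixes p s A C :: real
  assumes "s\<^sup>2 \<le> A * C" "A \<ge> 0" "C \<ge> 0"
  shows "2 * p * s \<le> p\<^sup>2 * C + A"
proof (cases "C = 0")
  case True
  with assms show ?thesis by simp
next
  case False
  with assms have "C > 0" by simp
  have "0 \<le> (p * C - s)\<^sup>2" by simp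
  then have "2 * p * s * C \<le> p\<^sup>2 * C * C + s\<^sup>2" by (simp add: power2_eq_square algebra_simps)
  also have "\<dots> \<le> p\<^sup>2 * C * C + A * C" using assms by simp
  finally have "(2 * p * s) * C \<le> (p\<^sup>2 * C + A) * C" by (simp add: algebra_simps)
  then show ?thesis using \<open>C > 0\<close> by simp
qed

lemma affine_row_sq_le:
  fixes a c :: "nat \<Rightarrow> real"
  shows "(p + (\<Sum>j\<in>J. a j * c j))\<^sup>2 \<le> (p\<^sup>2 + (\<Sum>j\<in>J. (a j)\<^sup>2)) * (1 + (\<Sum>j\<in>J. (c j)\<^sup>2))"
proof -
  let ?s = "\<Sum>j\<in>J. a j * c j" and ?A = "\<Sum>j\<in>J. (a j)\<^sup>2" and ?C = "\<Sum>j\<in>J. (c j)\<^sup>2"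
  have cs: "?s\<^sup>2 \<le> ?A * ?C" by (rule Cauchy_Schwarz_ineq_sum)
  moreover have "?A \<ge> 0" "?C \<ge> 0" by (auto intro: sum_nonneg)
  ultimately have "2 * p * ?s \<le> p\<^sup>2 * ?C + ?A" by (rule two_mult_le_of_sq_le)
  with cs show ?thesis by (simp add: power2_sum algebra_simps)
qed

lemma affine_layer_sq_le:
  fixes b z :: "nat \<Rightarrow> real" and w :: "nat \<Rightarrow> nat \<Rightarrow> real"
  shows "(\<Sum>i\<in>I. (b i + (\<Sum>j\<in>J. w i j * z j))\<^sup>2)
           \<le> ((\<Sum>i\<in>I. (b i)\<^sup>2) + (\<Sum>i\<in>I. \<Sum>j\<in>J. (w i j)\<^sup>2)) * (1 + (\<Sum>j\<in>J. (z j)\<^sup>2))"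
proof -
  have "(\<Sum>i\<in>I. (b i + (\<Sum>j\<in>J. w i j * z j))\<^sup>2)
      \<le> (\<Sum>i\<in>I. ((b i)\<^sup>2 + (\<Sum>j\<in>J. (w i j)\<^sup>2)) * (1 + (\<Sum>j\<in>J. (z j)\<^sup>2)))"
    by (intro sum_mono affine_row_sq_le)
  also have "\<dots> = ((\<Sum>i\<in>I. (b i)\<^sup>2) + (\<Sum>i\<in>I. \<Sum>j\<in>J. (w i j)\<^sup>2)) * (1 + (\<Sum>j\<in>J. (z j)\<^sup>2))"
    by (simp only: sum.distrib[symmetric] sum_distrib_right)
  finally show ?thesis .
qed

lemma linear_layer_sq_le:
  fixes z :: "nat \<Rightarrow> real" and w :: "nat \<Rightarrow> nat \<Rightarrow> real"
  shows "(\<Sum>i\<in>I. (\<Sum>j\<in>J. w i j * z j)\<^sup>2) \<le> (\<Sum>i\<in>I. \<Sum>j\<in>J. (w i j)\<^sup>2) * (\<Sum>j\<in>J. (z j)\<^sup>2)"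
proof -
  have "(\<Sum>i\<in>I. (\<Sum>j\<in>J. w i j * z j)\<^sup>2) \<le> (\<Sum>i\<in>I. (\<Sum>j\<in>J. (w i j)\<^sup>2) * (\<Sum>j\<in>J. (z j)\<^sup>2))"
    by (intro sum_mono Cauchy_Schwarz_ineq_sum)
  then show ?thesis by (simp add: sum_distrib_right)
qed

lemma scaled_linear_layer_sq_le:
  fixes s z :: "nat \<Rightarrow> real" and w :: "nat \<Rightarrow> nat \<Rightarrow> real"
  assumes "\<And>j. \<bar>s j\<bar> \<le> C"
  shows "(\<Sum>i\<in>I. (\<Sum>j\<in>J. w i j * (s j * z j))\<^sup>2) \<le> (\<Sum>i\<in>I. \<Sum>j\<in>J. (w i j)\<^sup>2) * (C\<^sup>2 * (\<Sum>j\<in>J. (z j)\<^sup>2))"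
proof -
  have "(s j)\<^sup>2 \<le> C\<^sup>2" for j
    using assms[of j] by (metis abs_le_square_iff abs_of_nonneg abs_ge_zero order_trans)
  then have "(\<Sum>j\<in>J. (s j * z j)\<^sup>2) \<le> C\<^sup>2 * (\<Sum>j\<in>J. (z j)\<^sup>2)"
    by (simp add: sum_distrib_left power_mult_distrib mult_right_mono sum_mono)
  then show ?thesis
    by (rule order_trans[OF linear_layer_sq_le mult_left_mono]) (auto intro!: sum_nonneg)
qed

lemma sum_sq_act_le:
  fixes act :: "real \<Rightarrow> real" and z :: "nat \<Rightarrow> real"
  assumes "\<And>y. \<bar>act y\<bar> \<le> \<bar>y\<bar>"
  shows "(\<Sum>j\<in>J. (act (z j))\<^sup>2) \<le> (\<Sum>j\<in>J. (z j)\<^sup>2)"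
  using assms by (intro sum_mono) (metis abs_le_square_iff)

lemma affine_act_layer_sq_le:
  fixes b z :: "nat \<Rightarrow> real" and w :: "nat \<Rightarrow> nat \<Rightarrow> real" and act :: "real \<Rightarrow> real"
  assumes "\<And>y. \<bar>act y\<bar> \<le> \<bar>y\<bar>"
  shows "(\<Sum>i\<in>I. (b i + (\<Sum>j\<in>J. w i j * act (z j)))\<^sup>2)
           \<le> ((\<Sum>i\<in>I. (b i)\<^sup>2) + (\<Sum>i\<in>I. \<Sum>j\<in>J. (w i j)\<^sup>2)) * (1 + (\<Sum>j\<in>J. (z j)\<^sup>2))"
  using affine_layer_sq_le[of b w "\<lambda>j. act (z j)" J I] sum_sq_act_le[OF assms, of z J]
  by (smt (verit, best) mult_left_mono sum_nonneg zero_le_power2)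

lemma sum_sq_add_le:
  fixes u v :: "nat \<Rightarrow> real"
  assumes U: "(\<Sum>i\<in>I. (u i)\<^sup>2) \<le> \<eta> * A" and V: "(\<Sum>i\<in>I. (v i)\<^sup>2) \<le> H * B"
    and "\<eta> \<ge> 0" "A \<ge> 0" "H \<ge> 0" "B \<ge> 0"
  shows "(\<Sum>i\<in>I. (u i + v i)\<^sup>2) \<le> (\<eta> + H) * (A + B)"
proof -
  let ?U = "\<Sum>i\<in>I. (u i)\<^sup>2" and ?V = "\<Sum>i\<in>I. (v i)\<^sup>2" and ?W = "\<Sum>i\<in>I. u i * v i"
  have "?W\<^sup>2 \<le> ?U * ?V" by (rule Cauchy_Schwarz_ineq_sum)
  also have "\<dots> \<le> (\<eta> * A) * (H * B)" using U V assms(3-6) by (intro mult_mono) (auto intro!: sum_nonneg)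
  also have "\<dots> = (\<eta> * B) * (H * A)" by (simp only: mult_ac)
  finally have W: "?W\<^sup>2 \<le> (\<eta> * B) * (H * A)" .
  have "2 * 1 * ?W \<le> 1\<^sup>2 * (\<eta> * B) + H * A"
    by (rule two_mult_le_of_sq_le) (use W assms in \<open>auto simp: mult_ac\<close>)
  moreover have "(\<Sum>i\<in>I. (u i + v i)\<^sup>2) = ?U + 2 * ?W + ?V"
    by (simp add: power2_sum sum.distrib sum_distrib_left mult.assoc)
  ultimately show ?thesis using U V by (simp add: algebra_simps)
qed

lemma sum_sq_add_le_2: "(\<Sum>i\<in>I. (u i + v i)\<^sup>2) \<le> 2 * (\<Sum>i\<in>I. (u i)\<^sup>2) + 2 * (\<Sum>i\<in>I. (v i)\<^sup>2)"
  for u v :: "nat \<Rightarrow> real"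
proof -
  have "(\<Sum>i\<in>I. (u i + v i)\<^sup>2) \<le> (\<Sum>i\<in>I. 2 * (u i)\<^sup>2 + 2 * (v i)\<^sup>2)"
    by (intro sum_mono) (smt (verit) zero_le_power2 power2_diff power2_sum)
  then show ?thesis by (simp add: sum.distrib sum_distrib_left)
qed

lemma net_sq_bound:
  fixes \<theta> :: "real^'n" and x :: "real^'m"
  assumes act_le: "\<And>k y. \<bar>act k y\<bar> \<le> \<bar>y\<bar>"
    and T: "\<And>k. k \<in> {1..K} \<Longrightarrow> layer_sqnorm ls idx \<theta> k \<le> T"
  shows "k \<in> {1..K} \<Longrightarrow> 1 + (\<Sum>i=1..ls k. (net ls idx idx0 act \<theta> k x i)\<^sup>2)
           \<le> (1 + T) ^ k * (1 + (\<Sum>j=1..ls 0. (x $ idx0 j)\<^sup>2))"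
proof (induction k)
  case (Suc k)
  let ?X = "1 + (\<Sum>j=1..ls 0. (x $ idx0 j)\<^sup>2)"
  have X0: "(\<Sum>j=1..ls 0. (x $ idx0 j)\<^sup>2) \<ge> 0" by (auto intro: sum_nonneg)
  have t: "layer_sqnorm ls idx \<theta> (Suc k) \<le> T" and t0: "0 \<le> layer_sqnorm ls idx \<theta> (Suc k)"
    using T Suc.prems layer_sqnorm_nonneg by auto
  show ?case
  proof (cases k)
    case 0
    have "(\<Sum>i=1..ls 1. (net ls idx idx0 act \<theta> 1 x i)\<^sup>2) \<le> layer_sqnorm ls idx \<theta> 1 * ?X"
      using affine_layer_sq_le[of "bs ls idx \<theta> 1" "wt ls idx \<theta> 1" "\<lambda>j. x $ idx0 j" "{1..ls 0}" "{1..ls 1}"]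
      by (simp add: layer_sqnorm_def)
    also have "\<dots> \<le> T * ?X" using t 0 X0 by (intro mult_right_mono) auto
    finally show ?thesis using 0 X0 by (simp add: algebra_simps)
  next
    case (Suc k')
    let ?n = "\<lambda>j. net ls idx idx0 act \<theta> k x j"
    have "(\<Sum>i=1..ls (Suc k). (net ls idx idx0 act \<theta> (Suc k) x i)\<^sup>2)
        \<le> layer_sqnorm ls idx \<theta> (Suc k) * (1 + (\<Sum>j=1..ls k. (?n j)\<^sup>2))"
      using affine_act_layer_sq_le[where act="act k", OF act_le, where b="bs ls idx \<theta> (Suc k)"
          and w="wt ls idx \<theta> (Suc k)" and z="?n" and J="{1..ls k}" and I="{1..ls (Suc k)}"] Suc
      by (simp add: layer_sqnorm_def)
    then have "1 + (\<Sum>i=1..ls (Suc k). (net ls idx idx0 act \<theta> (Suc k) x i)\<^sup>2)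
        \<le> (1 + layer_sqnorm ls idx \<theta> (Suc k)) * (1 + (\<Sum>j=1..ls k. (?n j)\<^sup>2))"
      by (simp add: algebra_simps) (smt (verit) sum_nonneg zero_le_power2)
    also have "\<dots> \<le> (1 + T) * ((1 + T) ^ k * ?X)"
      using t t0 Suc.IH Suc.prems \<open>k = Suc k'\<close> by (intro mult_mono) (auto intro!: add_nonneg_nonneg sum_nonneg)
    finally show ?thesis by (simp add: algebra_simps)
  qed
qed simp

lemma layer_perturbation_sq_bound:
  fixes \<theta> h :: "real^'n" and x :: "real^'m"
  assumes act_le: "\<And>k y. \<bar>act k y\<bar> \<le> \<bar>y\<bar>"
    and T: "\<And>k. k \<in> {1..K} \<Longrightarrow> layer_sqnorm ls idx \<theta> k \<le> T" and k: "k \<in> {1..K}"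
  shows "(\<Sum>i=1..ls (Suc k).
            (bs ls idx h (Suc k) i + (\<Sum>j=1..ls k. wt ls idx h (Suc k) i j * act k (net ls idx idx0 act \<theta> k x j)))\<^sup>2)
           \<le> layer_sqnorm ls idx h (Suc k) * ((1 + T) ^ k * (1 + (\<Sum>j=1..ls 0. (x $ idx0 j)\<^sup>2)))"
proof -
  let ?n = "\<lambda>j. net ls idx idx0 act \<theta> k x j"
  have "(\<Sum>i=1..ls (Suc k). (bs ls idx h (Suc k) i + (\<Sum>j=1..ls k. wt ls idx h (Suc k) i j * act k (?n j)))\<^sup>2)
      \<le> layer_sqnorm ls idx h (Suc k) * (1 + (\<Sum>j=1..ls k. (?n j)\<^sup>2))"
    using affine_act_layer_sq_le[where act="act k", OF act_le, where b="bs ls idx h (Suc k)"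
        and w="wt ls idx h (Suc k)" and z="?n" and J="{1..ls k}" and I="{1..ls (Suc k)}"]
    by (simp add: layer_sqnorm_def)
  also have "\<dots> \<le> layer_sqnorm ls idx h (Suc k) * ((1 + T) ^ k * (1 + (\<Sum>j=1..ls 0. (x $ idx0 j)\<^sup>2)))"
    using net_sq_bound[OF act_le T k] layer_sqnorm_nonneg by (intro mult_left_mono) auto
  finally show ?thesis .
qed

fun dnet :: "(nat \<Rightarrow> nat) \<Rightarrow> (nat \<Rightarrow> 'n) \<Rightarrow> (nat \<Rightarrow> 'm) \<Rightarrow> (nat \<Rightarrow> real \<Rightarrow> real) \<Rightarrow> (nat \<Rightarrow> real \<Rightarrow> real)
            \<Rightarrow> real^'n \<Rightarrow> nat \<Rightarrow> real^'m \<Rightarrow> real^'n \<Rightarrow> nat \<Rightarrow> real" where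
  "dnet ls idx idx0 act act' \<theta> 0 x h = (\<lambda>_. 0)"
| "dnet ls idx idx0 act act' \<theta> (Suc 0) x h =
     (\<lambda>i. bs ls idx h 1 i + (\<Sum>j=1..ls 0. wt ls idx h 1 i j * x $ idx0 j))"
| "dnet ls idx idx0 act act' \<theta> (Suc (Suc k)) x h =
     (\<lambda>i. bs ls idx h (Suc (Suc k)) i +
          (\<Sum>j=1..ls (Suc k). wt ls idx h (Suc (Suc k)) i j * act (Suc k) (net ls idx idx0 act \<theta> (Suc k) x j)
              + wt ls idx \<theta> (Suc (Suc k)) i j * act' (Suc k) (net ls idx idx0 act \<theta> (Suc k) x j)
                  * dnet ls idx idx0 act act' \<theta> (Suc k) x h j))"

text \<open>The value \<open>0\<close> at \<open>0\<close> is the limit of the derivatives of the smoothed activations, which vanish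
  left of \<open>AA / r\<close>; with it, \<open>G\<close> is computed by the chain rule through ReLU.\<close>
definition relu_deriv :: "nat \<Rightarrow> real \<Rightarrow> real" where
  "relu_deriv k y = (if y > 0 then 1 else 0)"

lemma act_inf_abs_le: "\<bar>act_inf k y\<bar> \<le> \<bar>y\<bar>"
  by (simp add: act_inf_def)

lemma relu_deriv_abs_le: "\<bar>relu_deriv k y\<bar> \<le> 1"
  by (simp add: relu_deriv_def)

lemma dnet_sq_bound_step:
  fixes T c C X :: real
  assumes "T \<ge> 0" "c \<ge> 1" "C\<^sup>2 \<le> c" "X \<ge> 0"
  shows "(1 + T) ^ Suc k * X + T * C\<^sup>2 * (real (Suc k) * c ^ k * (1 + T) ^ k * X)
           \<le> real (Suc (Suc k)) * c ^ Suc k * (1 + T) ^ Suc k * X"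
proof -
  have "1 * ((1 + T) ^ Suc k * X) \<le> c ^ Suc k * ((1 + T) ^ Suc k * X)"
    using assms by (intro mult_right_mono one_le_power) auto
  moreover have "T * C\<^sup>2 \<le> (1 + T) * c" using assms by (intro mult_mono) auto
  then have "T * C\<^sup>2 * (real (Suc k) * c ^ k * (1 + T) ^ k * X)
      \<le> (1 + T) * c * (real (Suc k) * c ^ k * (1 + T) ^ k * X)"
    using assms by (intro mult_right_mono) auto
  moreover have "(1 + T) * c * (real (Suc k) * c ^ k * (1 + T) ^ k * X) = real (Suc k) * c ^ Suc k * (1 + T) ^ Suc k * X"
    "real (Suc (Suc k)) * c ^ Suc k * (1 + T) ^ Suc k * X
      = c ^ Suc k * ((1 + T) ^ Suc k * X) + real (Suc k) * c ^ Suc k * (1 + T) ^ Suc k * X"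
    by (simp_all add: algebra_simps)
  ultimately show ?thesis by linarith
qed

lemma dnet_step_sq_bound:
  fixes \<theta> h :: "real^'n" and x :: "real^'m" and act act' :: "nat \<Rightarrow> real \<Rightarrow> real"
  assumes act_le: "\<And>k y. \<bar>act k y\<bar> \<le> \<bar>y\<bar>" and act'_le: "\<And>k y. \<bar>act' k y\<bar> \<le> C"
    and T: "\<And>k. k \<in> {1..K} \<Longrightarrow> layer_sqnorm ls idx \<theta> k \<le> T" and k: "Suc (Suc k) \<in> {1..K}"
    and prev: "(\<Sum>j=1..ls (Suc k). (dnet ls idx idx0 act act' \<theta> (Suc k) x h j)\<^sup>2) \<le> H * \<Phi>"
    and "H \<ge> 0" "\<Phi> \<ge> 0"
  shows "(\<Sum>i=1..ls (Suc (Suc k)). (dnet ls idx idx0 act act' \<theta> (Suc (Suc k)) x h i)\<^sup>2)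
           \<le> (layer_sqnorm ls idx h (Suc (Suc k)) + H)
              * ((1 + T) ^ Suc k * (1 + (\<Sum>j=1..ls 0. (x $ idx0 j)\<^sup>2)) + T * C\<^sup>2 * \<Phi>)"
proof -
  let ?k = "Suc k" and ?X = "1 + (\<Sum>j=1..ls 0. (x $ idx0 j)\<^sup>2)"
  let ?n = "\<lambda>j. net ls idx idx0 act \<theta> ?k x j" and ?D = "\<lambda>j. dnet ls idx idx0 act act' \<theta> ?k x h j"
  define u where "u i = bs ls idx h (Suc ?k) i + (\<Sum>j=1..ls ?k. wt ls idx h (Suc ?k) i j * act ?k (?n j))" for i
  define v where "v i = (\<Sum>j=1..ls ?k. wt ls idx \<theta> (Suc ?k) i j * (act' ?k (?n j) * ?D j))" for i
  have kK: "?k \<in> {1..K}" using k by auto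
  have T0: "T \<ge> 0" using T[OF kK] layer_sqnorm_nonneg[of ls idx \<theta> ?k] by linarith
  have U: "(\<Sum>i=1..ls (Suc ?k). (u i)\<^sup>2) \<le> layer_sqnorm ls idx h (Suc ?k) * ((1 + T) ^ ?k * ?X)"
    unfolding u_def by (rule layer_perturbation_sq_bound[OF act_le T kK])
  have "(\<Sum>i=1..ls (Suc ?k). (v i)\<^sup>2)
      \<le> (\<Sum>i=1..ls (Suc ?k). \<Sum>j=1..ls ?k. (wt ls idx \<theta> (Suc ?k) i j)\<^sup>2) * (C\<^sup>2 * (\<Sum>j=1..ls ?k. (?D j)\<^sup>2))"
    unfolding v_def by (rule scaled_linear_layer_sq_le) (rule act'_le)
  also have "\<dots> \<le> T * (C\<^sup>2 * (H * \<Phi>))"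
    using weights_sq_le_layer_sqnorm[where k="Suc ?k" and \<theta>=\<theta> and ls=ls and idx=idx] T[OF k] T0 prev
    by (intro mult_mono mult_left_mono) (auto intro!: sum_nonneg mult_nonneg_nonneg)
  finally have V: "(\<Sum>i=1..ls (Suc ?k). (v i)\<^sup>2) \<le> H * (T * C\<^sup>2 * \<Phi>)" by (simp add: mult_ac)
  have "(\<Sum>i=1..ls (Suc ?k). (u i + v i)\<^sup>2)
      \<le> (layer_sqnorm ls idx h (Suc ?k) + H) * ((1 + T) ^ ?k * ?X + T * C\<^sup>2 * \<Phi>)"
    using assms(6,7) T0
    by (intro sum_sq_add_le[OF U V]) (auto intro!: layer_sqnorm_nonneg add_nonneg_nonneg sum_nonneg mult_nonneg_nonneg)
  then show ?thesis unfolding u_def v_def by (simp add: sum.distrib mult.assoc add.assoc)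
qed

lemma dnet_sq_bound:
  fixes \<theta> h :: "real^'n" and x :: "real^'m" and act act' :: "nat \<Rightarrow> real \<Rightarrow> real"
  assumes act_le: "\<And>k y. \<bar>act k y\<bar> \<le> \<bar>y\<bar>" and act'_le: "\<And>k y. \<bar>act' k y\<bar> \<le> C"
    and T: "\<And>k. k \<in> {1..K} \<Longrightarrow> layer_sqnorm ls idx \<theta> k \<le> T"
  shows "k \<in> {1..K} \<Longrightarrow> (\<Sum>i=1..ls k. (dnet ls idx idx0 act act' \<theta> k x h i)\<^sup>2)
       \<le> (\<Sum>j=1..k. layer_sqnorm ls idx h j) * real k * (max 1 (C\<^sup>2)) ^ (k - 1) * (1 + T) ^ (k - 1)
          * (1 + (\<Sum>j=1..ls 0. (x $ idx0 j)\<^sup>2))"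
proof (induction k rule: induct_nat_012)
  case 1
  then show ?case
    using affine_layer_sq_le[of "bs ls idx h 1" "wt ls idx h 1" "\<lambda>j. x $ idx0 j" "{1..ls 0}" "{1..ls 1}"]
    by (simp add: layer_sqnorm_def)
next
  case (ge2 k)
  let ?X = "1 + (\<Sum>j=1..ls 0. (x $ idx0 j)\<^sup>2)" and ?c = "max 1 (C\<^sup>2)"
  define H where "H = (\<Sum>j=1..Suc k. layer_sqnorm ls idx h j)"
  define \<Phi> where "\<Phi> = real (Suc k) * ?c ^ k * (1 + T) ^ k * ?X"
  have T0: "T \<ge> 0" using T[of 1] ge2.prems layer_sqnorm_nonneg[of ls idx \<theta> 1] by auto
  have X0: "?X \<ge> 0" by (auto intro!: add_nonneg_nonneg sum_nonneg)
  have H0: "H \<ge> 0" unfolding H_def by (rule sum_nonneg) (rule layer_sqnorm_nonneg)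
  have "(\<Sum>i=1..ls (Suc (Suc k)). (dnet ls idx idx0 act act' \<theta> (Suc (Suc k)) x h i)\<^sup>2)
      \<le> (layer_sqnorm ls idx h (Suc (Suc k)) + H) * ((1 + T) ^ Suc k * ?X + T * C\<^sup>2 * \<Phi>)"
    using ge2.IH(2) ge2.prems H0 T0 X0
    by (intro dnet_step_sq_bound[OF act_le act'_le T]) (auto simp: H_def \<Phi>_def mult.assoc)
  also have "\<dots> \<le> (layer_sqnorm ls idx h (Suc (Suc k)) + H) * (real (Suc (Suc k)) * ?c ^ Suc k * (1 + T) ^ Suc k * ?X)"
    unfolding \<Phi>_def using T0 X0 H0
    by (intro mult_left_mono dnet_sq_bound_step) (auto intro!: add_nonneg_nonneg layer_sqnorm_nonneg)
  also have "layer_sqnorm ls idx h (Suc (Suc k)) + H = (\<Sum>j=1..Suc (Suc k). layer_sqnorm ls idx h j)"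
    unfolding H_def by simp
  finally show ?case by (simp add: mult.assoc)
qed simp

text \<open>Euler's identity for the positively homogeneous ReLU network; it rests on
  \<open>relu_deriv k y * y = act_inf k y\<close>.\<close>
lemma dnet_relu_euler:
  fixes \<theta> v :: "real^'n" and x :: "real^'m"
  assumes hb: "\<And>k i. k \<in> {1..K} \<Longrightarrow> i \<in> {1..ls k} \<Longrightarrow>
                  bs ls idx v k i = c * real k * bs ls idx \<theta> k i + (if k = K then e i else 0)"
    and hw: "\<And>k i j. k \<in> {1..K} \<Longrightarrow> i \<in> {1..ls k} \<Longrightarrow> j \<in> {1..ls (k - 1)} \<Longrightarrow>
                  wt ls idx v k i j = c * wt ls idx \<theta> k i j"
  shows "k \<in> {1..K} \<Longrightarrow> i \<in> {1..ls k} \<Longrightarrow>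
     dnet ls idx idx0 act_inf relu_deriv \<theta> k x v i
       = c * real k * net ls idx idx0 act_inf \<theta> k x i + (if k = K then e i else 0)"
proof (induction k arbitrary: i)
  case (Suc k)
  show ?case
  proof (cases k)
    case 0
    have "dnet ls idx idx0 act_inf relu_deriv \<theta> (Suc 0) x v i
        = c * bs ls idx \<theta> 1 i + (if 1 = K then e i else 0) + (\<Sum>j=1..ls 0. c * wt ls idx \<theta> 1 i j * x $ idx0 j)"
      using Suc.prems 0 hb hw by (auto intro!: sum.cong)
    then show ?thesis using 0 by (simp add: algebra_simps sum_distrib_left)
  next
    case (Suc k')
    let ?n = "\<lambda>j. net ls idx idx0 act_inf \<theta> k x j"
    have "dnet ls idx idx0 act_inf relu_deriv \<theta> (Suc k) x v i
        = c * real (Suc k) * bs ls idx \<theta> (Suc k) i + (if Suc k = K then e i else 0)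
          + (\<Sum>j=1..ls k. c * real (Suc k) * (wt ls idx \<theta> (Suc k) i j * act_inf k (?n j)))"
    proof -
      have "wt ls idx v (Suc k) i j * act_inf k (?n j)
              + wt ls idx \<theta> (Suc k) i j * relu_deriv k (?n j) * dnet ls idx idx0 act_inf relu_deriv \<theta> k x v j
            = c * real (Suc k) * (wt ls idx \<theta> (Suc k) i j * act_inf k (?n j))" if j: "j \<in> {1..ls k}" for j
      proof -
        have "relu_deriv k (?n j) * ?n j = act_inf k (?n j)"
          by (simp add: relu_deriv_def act_inf_def)
        moreover have "dnet ls idx idx0 act_inf relu_deriv \<theta> k x v j = c * real k * ?n j"
          using Suc.IH[OF _ j] Suc.prems Suc by simp
        ultimately show ?thesis using hw Suc.prems j by (simp add: algebra_simps)
      qed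
      then show ?thesis using hb Suc.prems Suc by (auto intro!: sum.cong)
    qed
    then show ?thesis using Suc by (simp add: algebra_simps sum_distrib_left)
  qed
qed simp

section \<open>Differentiation under the integral sign\<close>

lemma has_derivative_remainder_le:
  fixes F :: "'v::{real_normed_vector, perfect_space} \<Rightarrow> real"
  assumes der: "\<And>\<theta>. \<theta> \<in> cball \<theta>0 1 \<Longrightarrow> (F has_derivative D \<theta>) (at \<theta>)"
    and bnd: "\<And>\<theta> h. \<theta> \<in> cball \<theta>0 1 \<Longrightarrow> \<bar>D \<theta> h\<bar> \<le> B * norm h"
    and h: "norm h \<le> 1"
  shows "\<bar>F (\<theta>0 + h) - F \<theta>0 - D \<theta>0 h\<bar> \<le> 2 * B * norm h"
proof -
  have "norm (F (\<theta>0 + h) - F \<theta>0 - D \<theta>0 ((\<theta>0 + h) - \<theta>0)) \<le> norm ((\<theta>0 + h) - \<theta>0) * (2 * B)"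
  proof (rule differentiable_bound_linearization[where S="cball \<theta>0 1"])
    show "\<theta>0 + t *\<^sub>R (\<theta>0 + h - \<theta>0) \<in> cball \<theta>0 1" if "t \<in> {0..1}" for t
      using that h by (auto simp: dist_norm intro!: mult_le_one)
    show "(F has_derivative D \<theta>) (at \<theta> within cball \<theta>0 1)" if "\<theta> \<in> cball \<theta>0 1" for \<theta>
      using der[OF that] by (rule has_derivative_at_withinI)
    show "onorm (D \<theta> - D \<theta>0) \<le> 2 * B" if "\<theta> \<in> cball \<theta>0 1" for \<theta>
    proof (rule onorm_le)
      fix h'
      have "\<bar>D \<theta> h' - D \<theta>0 h'\<bar> \<le> B * norm h' + B * norm h'"
        using bnd[OF that, of h'] bnd[of \<theta>0 h'] by simp
      then show "norm ((D \<theta> - D \<theta>0) h') \<le> 2 * B * norm h'" by simp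
    qed
  qed simp
  then show ?thesis by (simp add: mult.commute)
qed

lemma bounded_linear_integral:
  fixes D :: "'a \<Rightarrow> 'v::euclidean_space \<Rightarrow> real"
  assumes "finite_measure M"
    and lin: "\<And>x. x \<in> space M \<Longrightarrow> linear (D x)"
    and meas: "\<And>h. (\<lambda>x. D x h) \<in> borel_measurable M"
    and bnd: "\<And>x h. x \<in> space M \<Longrightarrow> \<bar>D x h\<bar> \<le> B * norm h"
  shows "bounded_linear (\<lambda>h. \<integral>x. D x h \<partial>M)"
proof -
  interpret finite_measure M by fact
  have int: "integrable M (\<lambda>x. D x h)" for h
    using bnd meas by (intro integrable_const_bound[where B="B * norm h"]) auto
  have "linear (\<lambda>h. \<integral>x. D x h \<partial>M)"
  proof (rule linearI)
    fix h h' :: 'v and c :: real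
    have "(\<integral>x. D x (h + h') \<partial>M) = (\<integral>x. D x h + D x h' \<partial>M)"
      by (rule Bochner_Integration.integral_cong) (auto simp: linear_add lin)
    then show "(\<integral>x. D x (h + h') \<partial>M) = (\<integral>x. D x h \<partial>M) + (\<integral>x. D x h' \<partial>M)"
      using int by simp
    have "(\<integral>x. D x (c *\<^sub>R h) \<partial>M) = (\<integral>x. c * D x h \<partial>M)"
      by (rule Bochner_Integration.integral_cong) (auto simp: linear_scale lin)
    then show "(\<integral>x. D x (c *\<^sub>R h) \<partial>M) = c *\<^sub>R (\<integral>x. D x h \<partial>M)" by simp
  qed
  then show ?thesis by (simp add: linear_conv_bounded_linear)
qed

lemma integral_tendsto_0_at_0:
  fixes g :: "'v::real_normed_vector \<Rightarrow> 'a \<Rightarrow> real"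
  assumes "finite_measure M"
    and meas: "\<And>h. g h \<in> borel_measurable M"
    and lim: "\<And>x. x \<in> space M \<Longrightarrow> ((\<lambda>h. g h x) \<longlongrightarrow> 0) (at 0)"
    and bnd: "\<And>x h. x \<in> space M \<Longrightarrow> h \<noteq> 0 \<Longrightarrow> norm h \<le> 1 \<Longrightarrow> \<bar>g h x\<bar> \<le> c"
  shows "((\<lambda>h. \<integral>x. g h x \<partial>M) \<longlongrightarrow> 0) (at 0)"
proof (subst tendsto_at_iff_sequentially, intro allI impI)
  interpret finite_measure M by fact
  fix X :: "nat \<Rightarrow> 'v"
  assume X0: "\<forall>i. X i \<in> UNIV - {0}" and Xl: "X \<longlonglongrightarrow> 0"
  obtain N where N: "\<And>n. n \<ge> N \<Longrightarrow> norm (X n) \<le> 1"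
    using Xl[THEN tendstoD, of 1] by (force simp: eventually_sequentially dist_norm less_imp_le)
  have "(\<lambda>n. \<integral>x. g (X (n + N)) x \<partial>M) \<longlonglongrightarrow> (\<integral>x. 0 \<partial>M)"
  proof (rule integral_dominated_convergence[where w="\<lambda>_. c"])
    show "AE x in M. (\<lambda>n. g (X (n + N)) x) \<longlonglongrightarrow> 0"
    proof (rule AE_I2)
      fix x assume "x \<in> space M"
      with X0 Xl[THEN LIMSEQ_ignore_initial_segment, of N]
      have "((\<lambda>h. g h x) \<circ> (\<lambda>n. X (n + N))) \<longlonglongrightarrow> 0"
        using lim by (simp add: tendsto_at_iff_sequentially)
      then show "(\<lambda>n. g (X (n + N)) x) \<longlonglongrightarrow> 0" by (simp add: o_def)
    qed
    show "AE x in M. norm (g (X (n + N)) x) \<le> c" for n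
    proof (rule AE_I2)
      fix x assume "x \<in> space M"
      then show "norm (g (X (n + N)) x) \<le> c" using bnd N[of "n + N"] X0 by simp
    qed
  qed (use meas in simp_all)
  then show "((\<lambda>h. \<integral>x. g h x \<partial>M) \<circ> X) \<longlonglongrightarrow> 0"
    by (simp add: o_def LIMSEQ_offset[where k=N])
qed

lemma has_derivative_integral:
  fixes F :: "'v::euclidean_space \<Rightarrow> 'a \<Rightarrow> real" and D :: "'v \<Rightarrow> 'a \<Rightarrow> 'v \<Rightarrow> real"
  assumes fin: "finite_measure M"
    and int: "\<And>\<theta>. integrable M (F \<theta>)"
    and meas: "\<And>h. (\<lambda>x. D \<theta>0 x h) \<in> borel_measurable M"
    and der: "\<And>x \<theta>. x \<in> space M \<Longrightarrow> ((\<lambda>\<theta>. F \<theta> x) has_derivative D \<theta> x) (at \<theta>)"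
    and bnd: "\<And>x \<theta> h. x \<in> space M \<Longrightarrow> \<theta> \<in> cball \<theta>0 1 \<Longrightarrow> \<bar>D \<theta> x h\<bar> \<le> B * norm h"
  shows "((\<lambda>\<theta>. \<integral>x. F \<theta> x \<partial>M) has_derivative (\<lambda>h. \<integral>x. D \<theta>0 x h \<partial>M)) (at \<theta>0)"
proof -
  interpret finite_measure M by (rule fin)
  have Dint: "integrable M (\<lambda>x. D \<theta>0 x h)" for h
    using bnd[of _ \<theta>0 h] meas[of h] by (intro integrable_const_bound[where B="B * norm h"]) auto
  define Q where "Q h x = \<bar>F (\<theta>0 + h) x - F \<theta>0 x - D \<theta>0 x h\<bar> / norm h" for h x
  have Q_tendsto: "((\<lambda>h. \<integral>x. Q h x \<partial>M) \<longlongrightarrow> 0) (at 0)"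
  proof (rule integral_tendsto_0_at_0[OF fin])
    show "Q h \<in> borel_measurable M" for h
      unfolding Q_def using int meas by (intro borel_measurable_divide borel_measurable_abs borel_measurable_diff) auto
    show "((\<lambda>h. Q h x) \<longlongrightarrow> 0) (at 0)" if "x \<in> space M" for x
      using der[OF that, of \<theta>0] by (simp add: has_derivative_at Q_def)
    show "\<bar>Q h x\<bar> \<le> 2 * B" if x: "x \<in> space M" and "h \<noteq> 0" "norm h \<le> 1" for x h
    proof -
      have "\<bar>F (\<theta>0 + h) x - F \<theta>0 x - D \<theta>0 x h\<bar> \<le> 2 * B * norm h"
      proof (rule has_derivative_remainder_le[where F="\<lambda>\<theta>. F \<theta> x" and D="\<lambda>\<theta>. D \<theta> x"])
        show "((\<lambda>\<theta>. F \<theta> x) has_derivative D \<theta> x) (at \<theta>)" for \<theta> by (rule der[OF x])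
        show "\<bar>D \<theta> x h'\<bar> \<le> B * norm h'" if "\<theta> \<in> cball \<theta>0 1" for \<theta> h' by (rule bnd[OF x that])
      qed fact
      then show ?thesis unfolding Q_def using that by (simp add: divide_le_eq mult.commute)
    qed
  qed
  have quotient_le: "norm ((\<integral>x. F (\<theta>0 + h) x \<partial>M) - (\<integral>x. F \<theta>0 x \<partial>M) - (\<integral>x. D \<theta>0 x h \<partial>M)) / norm h
      \<le> (\<integral>x. Q h x \<partial>M)" for h
  proof -
    have "norm ((\<integral>x. F (\<theta>0 + h) x \<partial>M) - (\<integral>x. F \<theta>0 x \<partial>M) - (\<integral>x. D \<theta>0 x h \<partial>M))
        \<le> (\<integral>x. \<bar>F (\<theta>0 + h) x - F \<theta>0 x - D \<theta>0 x h\<bar> \<partial>M)"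
      using int Dint integral_norm_bound[of M "\<lambda>x. F (\<theta>0 + h) x - F \<theta>0 x - D \<theta>0 x h"] by simp
    then show ?thesis unfolding Q_def by (simp add: divide_right_mono)
  qed
  have "((\<lambda>h. norm ((\<integral>x. F (\<theta>0 + h) x \<partial>M) - (\<integral>x. F \<theta>0 x \<partial>M) - (\<integral>x. D \<theta>0 x h \<partial>M))
      / norm h) \<longlongrightarrow> 0) (at 0)"
    by (rule Lim_null_comparison[OF always_eventually Q_tendsto]) (use quotient_le in simp)
  moreover have "bounded_linear (\<lambda>h. \<integral>x. D \<theta>0 x h \<partial>M)"
  proof (rule bounded_linear_integral[OF fin _ meas])
    show "linear (D \<theta>0 x)" if "x \<in> space M" for x using der[OF that] by (rule has_derivative_linear)
    show "\<bar>D \<theta>0 x h\<bar> \<le> B * norm h" if "x \<in> space M" for x h using bnd[OF that] by simp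
  qed
  ultimately show ?thesis by (simp add: has_derivative_at)
qed

section \<open>Differentiability and measurability\<close>

lemma net_measurable:
  assumes "\<And>k. act k \<in> borel_measurable borel"
  shows "(\<lambda>x. net ls idx idx0 act \<theta> k x i) \<in> borel_measurable borel"
proof (induction k arbitrary: i rule: induct_nat_012)
  case (ge2 k)
  show ?case using measurable_compose[OF ge2(2) assms] by simp
qed simp_all

lemma dnet_measurable:
  assumes "\<And>k. act k \<in> borel_measurable borel" "\<And>k. act' k \<in> borel_measurable borel"
  shows "(\<lambda>x. dnet ls idx idx0 act act' \<theta> k x h i) \<in> borel_measurable borel"
proof (induction k arbitrary: i rule: induct_nat_012)
  case (ge2 k)
  have "(\<lambda>x. act (Suc k) (net ls idx idx0 act \<theta> (Suc k) x j)) \<in> borel_measurable borel"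
    "(\<lambda>x. act' (Suc k) (net ls idx idx0 act \<theta> (Suc k) x j)) \<in> borel_measurable borel" for j
    by (rule measurable_compose[OF net_measurable[where act=act, OF assms(1)] assms(1)],
        rule measurable_compose[OF net_measurable[where act=act, OF assms(1)] assms(2)])
  with ge2(2) show ?case by simp
qed simp_all

lemma act_inf_measurable: "act_inf k \<in> borel_measurable borel"
  unfolding act_inf_def by (intro borel_measurable_continuous_onI continuous_intros)

lemma relu_deriv_measurable: "relu_deriv k \<in> borel_measurable borel"
  unfolding relu_deriv_def by measurable

lemma bs_has_derivative: "((\<lambda>\<theta>. bs ls idx \<theta> k i) has_derivative (\<lambda>h. bs ls idx h k i)) F"
  unfolding bs_def by (rule bounded_linear_imp_has_derivative[OF bounded_linear_vec_nth])

lemma wt_has_derivative: "((\<lambda>\<theta>. wt ls idx \<theta> k i j) has_derivative (\<lambda>h. wt ls idx h k i j)) F"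
  unfolding wt_def by (rule bounded_linear_imp_has_derivative[OF bounded_linear_vec_nth])

lemma net_has_derivative:
  fixes \<theta>0 :: "real^'n"
  assumes act': "\<And>k y. (act k has_real_derivative act' k y) (at y)"
  shows "((\<lambda>\<theta>. net ls idx idx0 act \<theta> k x i) has_derivative (\<lambda>h. dnet ls idx idx0 act act' \<theta>0 k x h i)) (at \<theta>0)"
proof (induction k arbitrary: i rule: induct_nat_012)
  case 1
  show ?case
    by (simp, intro has_derivative_add has_derivative_sum has_derivative_mult_left bs_has_derivative wt_has_derivative)
next
  case (ge2 k)
  let ?K = "Suc k" and ?n = "\<lambda>\<theta> j. net ls idx idx0 act \<theta> (Suc k) x j"
  have "((\<lambda>\<theta>. act ?K (?n \<theta> j)) has_derivative
          (\<lambda>h. dnet ls idx idx0 act act' \<theta>0 ?K x h j * act' ?K (?n \<theta>0 j))) (at \<theta>0)" for j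
    by (rule DERIV_compose_FDERIV[OF act' ge2(2)])
  then have "((\<lambda>\<theta>. bs ls idx \<theta> (Suc ?K) i + (\<Sum>j=1..ls ?K. wt ls idx \<theta> (Suc ?K) i j * act ?K (?n \<theta> j)))
      has_derivative
       (\<lambda>h. bs ls idx h (Suc ?K) i + (\<Sum>j=1..ls ?K. wt ls idx \<theta>0 (Suc ?K) i j
              * (dnet ls idx idx0 act act' \<theta>0 ?K x h j * act' ?K (?n \<theta>0 j))
            + wt ls idx h (Suc ?K) i j * act ?K (?n \<theta>0 j)))) (at \<theta>0)"
    by (intro has_derivative_add has_derivative_sum has_derivative_mult bs_has_derivative wt_has_derivative)
  then show ?case by (simp add: algebra_simps)
qed (simp add: has_derivative_const)

definition err_deriv :: "(nat \<Rightarrow> nat) \<Rightarrow> nat \<Rightarrow> (nat \<Rightarrow> 'n) \<Rightarrow> (nat \<Rightarrow> 'm) \<Rightarrow> (nat \<Rightarrow> real \<Rightarrow> real)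
    \<Rightarrow> (nat \<Rightarrow> real \<Rightarrow> real) \<Rightarrow> (real^'m \<Rightarrow> nat \<Rightarrow> real) \<Rightarrow> real^'n \<Rightarrow> real^'m \<Rightarrow> real^'n \<Rightarrow> real" where
  "err_deriv ls L idx idx0 act act' f \<theta> x h =
     (\<Sum>i=1..ls L. 2 * (net ls idx idx0 act \<theta> L x i - f x i) * dnet ls idx idx0 act act' \<theta> L x h i)"

lemma err_has_derivative:
  fixes \<theta>0 :: "real^'n"
  assumes "\<And>k y. (act k has_real_derivative act' k y) (at y)"
  shows "((\<lambda>\<theta>. err ls L idx idx0 act f \<theta> x) has_derivative err_deriv ls L idx idx0 act act' f \<theta>0 x) (at \<theta>0)"
proof -
  have "((\<lambda>\<theta>. \<Sum>i=1..ls L. (net ls idx idx0 act \<theta> L x i - f x i) * (net ls idx idx0 act \<theta> L x i - f x i)) has_derivative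
     (\<lambda>h. \<Sum>i=1..ls L. (net ls idx idx0 act \<theta>0 L x i - f x i) * (dnet ls idx idx0 act act' \<theta>0 L x h i - 0)
          + (dnet ls idx idx0 act act' \<theta>0 L x h i - 0) * (net ls idx idx0 act \<theta>0 L x i - f x i))) (at \<theta>0)"
    by (intro has_derivative_sum has_derivative_mult has_derivative_diff net_has_derivative[OF assms]
        has_derivative_const)
  then show ?thesis unfolding err_def err_deriv_def by (simp add: power2_eq_square algebra_simps)
qed

lemma err_deriv_measurable:
  assumes "\<And>k. act k \<in> borel_measurable borel" "\<And>k. act' k \<in> borel_measurable borel"
    and "\<And>i. i \<in> {1..ls L} \<Longrightarrow> (\<lambda>x. f x i) \<in> borel_measurable borel"
  shows "(\<lambda>x. err_deriv ls L idx idx0 act act' f \<theta> x h) \<in> borel_measurable borel"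
  unfolding err_deriv_def using net_measurable[OF assms(1)] dnet_measurable[OF assms(1,2)] assms(3)
  by (intro borel_measurable_sum borel_measurable_times borel_measurable_diff) auto

lemma err_sq_bound:
  fixes \<theta> :: "real^'n" and x :: "real^'m" and act :: "nat \<Rightarrow> real \<Rightarrow> real"
  assumes bij: "bij_betw idx {1..dd ls L} (UNIV :: 'n set)" and L: "L \<ge> 1"
    and act_le: "\<And>k y. \<bar>act k y\<bar> \<le> \<bar>y\<bar>"
    and X: "1 + (\<Sum>j=1..ls 0. (x $ idx0 j)\<^sup>2) \<le> Xb" and F: "(\<Sum>i=1..ls L. (f x i)\<^sup>2) \<le> Fb"
    and \<rho>: "norm \<theta> \<le> \<rho>"
  shows "(\<Sum>i=1..ls L. (net ls idx idx0 act \<theta> L x i - f x i)\<^sup>2) \<le> 2 * (1 + \<rho>\<^sup>2) ^ L * Xb + 2 * Fb"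
proof -
  let ?N = "\<lambda>i. net ls idx idx0 act \<theta> L x i"
  have "1 + (\<Sum>i=1..ls L. (?N i)\<^sup>2) \<le> (1 + \<rho>\<^sup>2) ^ L * (1 + (\<Sum>j=1..ls 0. (x $ idx0 j)\<^sup>2))"
    using L by (intro net_sq_bound[OF act_le layer_sqnorm_le_radius[OF bij _ \<rho>]]) auto
  also have "\<dots> \<le> (1 + \<rho>\<^sup>2) ^ L * Xb" using X by (intro mult_left_mono) auto
  finally have "(\<Sum>i=1..ls L. (?N i)\<^sup>2) \<le> (1 + \<rho>\<^sup>2) ^ L * Xb" by simp
  then show ?thesis using sum_sq_add_le_2[of ?N "\<lambda>i. - f x i" "{1..ls L}"] F by simp
qed

lemma dnet_output_sq_bound:
  fixes \<theta> h :: "real^'n" and x :: "real^'m" and act act' :: "nat \<Rightarrow> real \<Rightarrow> real"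
  assumes bij: "bij_betw idx {1..dd ls L} (UNIV :: 'n set)" and L: "L \<ge> 1"
    and act_le: "\<And>k y. \<bar>act k y\<bar> \<le> \<bar>y\<bar>" and act'_le: "\<And>k y. \<bar>act' k y\<bar> \<le> C"
    and X: "1 + (\<Sum>j=1..ls 0. (x $ idx0 j)\<^sup>2) \<le> Xb" and \<rho>: "norm \<theta> \<le> \<rho>"
  shows "(\<Sum>i=1..ls L. (dnet ls idx idx0 act act' \<theta> L x h i)\<^sup>2)
           \<le> (norm h)\<^sup>2 * (real L * (max 1 (C\<^sup>2)) ^ (L - 1) * (1 + \<rho>\<^sup>2) ^ (L - 1) * Xb)"
proof -
  have "(\<Sum>i=1..ls L. (dnet ls idx idx0 act act' \<theta> L x h i)\<^sup>2)
      \<le> (\<Sum>j=1..L. layer_sqnorm ls idx h j) * real L * (max 1 (C\<^sup>2)) ^ (L - 1) * (1 + \<rho>\<^sup>2) ^ (L - 1)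
         * (1 + (\<Sum>j=1..ls 0. (x $ idx0 j)\<^sup>2))"
    using L by (intro dnet_sq_bound[OF act_le act'_le layer_sqnorm_le_radius[OF bij _ \<rho>]]) auto
  also have "\<dots> \<le> (\<Sum>j=1..L. layer_sqnorm ls idx h j) * real L * (max 1 (C\<^sup>2)) ^ (L - 1) * (1 + \<rho>\<^sup>2) ^ (L - 1) * Xb"
    using X by (intro mult_left_mono) (auto intro!: mult_nonneg_nonneg sum_nonneg layer_sqnorm_nonneg)
  finally show ?thesis unfolding norm_sq_eq_sum_layer_sqnorm[OF bij] by (simp add: mult_ac)
qed

lemma err_deriv_bound:
  fixes \<theta> h :: "real^'n" and x :: "real^'m" and act act' :: "nat \<Rightarrow> real \<Rightarrow> real"
  assumes bij: "bij_betw idx {1..dd ls L} (UNIV :: 'n set)" and L: "L \<ge> 1"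
    and act_le: "\<And>k y. \<bar>act k y\<bar> \<le> \<bar>y\<bar>" and act'_le: "\<And>k y. \<bar>act' k y\<bar> \<le> C"
    and X: "1 + (\<Sum>j=1..ls 0. (x $ idx0 j)\<^sup>2) \<le> Xb"
    and F: "(\<Sum>i=1..ls L. (f x i)\<^sup>2) \<le> Fb"
    and \<rho>: "norm \<theta> \<le> \<rho>"
  shows "\<bar>err_deriv ls L idx idx0 act act' f \<theta> x h\<bar>
     \<le> 2 * sqrt ((2 * (1 + \<rho>\<^sup>2) ^ L * Xb + 2 * Fb)
                  * (real L * (max 1 (C\<^sup>2)) ^ (L - 1) * (1 + \<rho>\<^sup>2) ^ (L - 1) * Xb)) * norm h"
proof -
  let ?e = "\<lambda>i. net ls idx idx0 act \<theta> L x i - f x i" and ?D = "\<lambda>i. dnet ls idx idx0 act act' \<theta> L x h i"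
  define E where "E = 2 * (1 + \<rho>\<^sup>2) ^ L * Xb + 2 * Fb"
  define \<Phi> where "\<Phi> = real L * (max 1 (C\<^sup>2)) ^ (L - 1) * (1 + \<rho>\<^sup>2) ^ (L - 1) * Xb"
  have EN: "(\<Sum>i=1..ls L. (?e i)\<^sup>2) \<le> E"
    unfolding E_def by (rule err_sq_bound[where f=f and act=act, OF bij L act_le X F \<rho>])
  have DN: "(\<Sum>i=1..ls L. (?D i)\<^sup>2) \<le> (norm h)\<^sup>2 * \<Phi>"
    unfolding \<Phi>_def by (rule dnet_output_sq_bound[where act=act and act'=act', OF bij L act_le act'_le X \<rho>])
  have E0: "0 \<le> E" using EN sum_nonneg[of "{1..ls L}" "\<lambda>i. (?e i)\<^sup>2"] by simp
  have "\<bar>err_deriv ls L idx idx0 act act' f \<theta> x h\<bar> = 2 * \<bar>\<Sum>i=1..ls L. ?e i * ?D i\<bar>"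
    unfolding err_deriv_def by (simp only: mult.assoc sum_distrib_left[symmetric] abs_mult abs_numeral)
  also have "\<dots> \<le> 2 * sqrt ((\<Sum>i=1..ls L. (?e i)\<^sup>2) * (\<Sum>i=1..ls L. (?D i)\<^sup>2))"
    using Cauchy_Schwarz_ineq_sum[of ?e ?D "{1..ls L}"] by (simp add: real_le_rsqrt)
  also have "\<dots> \<le> 2 * sqrt (E * ((norm h)\<^sup>2 * \<Phi>))"
    using EN DN E0 by (intro mult_left_mono real_sqrt_le_mono mult_mono) (auto intro: sum_nonneg)
  also have "\<dots> = 2 * sqrt (E * \<Phi>) * norm h"
    by (simp add: real_sqrt_mult mult_ac)
  finally show ?thesis unfolding E_def \<Phi>_def .
qed

section \<open>Smoothed ReLU networks converge to the ReLU network\<close>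

lemma powr_ge_1: "r \<ge> 1 \<Longrightarrow> r powr (1 / real k) \<ge> (1::real)"
  by (rule ge_one_powr_ge_zero) auto

lemma powr_neg_tendsto_0: "k \<ge> 1 \<Longrightarrow> ((\<lambda>r::real. r powr (- 1 / real k)) \<longlongrightarrow> 0) at_top"
  by (rule tendsto_neg_powr) (auto intro: filterlim_ident)

locale relu_smoothing =
  fixes R :: "real \<Rightarrow> real \<Rightarrow> real" and AA BB C :: real
  assumes AA_pos: "0 < AA" and AA_less_BB: "AA < BB"
    and R_differentiable: "\<And>r x. r \<ge> 1 \<Longrightarrow> R r differentiable (at x)"
    and deriv_R_continuous: "\<And>r. r \<ge> 1 \<Longrightarrow> continuous_on UNIV (deriv (R r))"
    and R_eq_0: "\<And>r x. r \<ge> 1 \<Longrightarrow> x \<le> AA / r \<Longrightarrow> R r x = 0"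
    and R_bounds: "\<And>r y. r \<ge> 1 \<Longrightarrow> 0 \<le> R r y \<and> R r y \<le> max y 0"
    and R_eq_id: "\<And>r z. r \<ge> 1 \<Longrightarrow> z \<ge> BB / r \<Longrightarrow> R r z = z"
    and deriv_R_bound: "\<And>r x. r \<ge> 1 \<Longrightarrow> \<bar>deriv (R r) x\<bar> \<le> C"
begin

definition dact_r :: "real \<Rightarrow> nat \<Rightarrow> real \<Rightarrow> real" where
  "dact_r r k = deriv (R (r powr (1 / real k)))"

lemma C_nonneg: "C \<ge> 0"
  using deriv_R_bound[of 1 0] by linarith

lemma R_abs_le: "s \<ge> 1 \<Longrightarrow> \<bar>R s y\<bar> \<le> \<bar>y\<bar>"
  using R_bounds[of s y] by (cases "y \<le> 0") (auto simp: max_def)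

lemma R_has_real_derivative: "s \<ge> 1 \<Longrightarrow> (R s has_real_derivative deriv (R s) y) (at y)"
  using R_differentiable by (simp add: DERIV_deriv_iff_real_differentiable)

lemma R_lipschitz:
  assumes "s \<ge> 1" shows "\<bar>R s a - R s b\<bar> \<le> C * \<bar>a - b\<bar>"
proof -
  have "norm (R s a - R s b) \<le> C * norm (a - b)"
    by (rule field_differentiable_bound[where S=UNIV and f'="deriv (R s)"])
       (use R_has_real_derivative deriv_R_bound assms in auto)
  then show ?thesis by simp
qed

lemma R_relu_dist:
  assumes "s \<ge> 1" shows "\<bar>R s y - max y 0\<bar> \<le> BB / s"
proof -
  have "BB / s > 0" using assms AA_pos AA_less_BB by simp
  then show ?thesis using R_bounds[OF assms, of y] R_eq_id[OF assms, of y] by (cases "y \<ge> BB / s") (auto simp: max_def)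
qed

lemma deriv_R_eq_1:
  assumes "s \<ge> 1" "y > BB / s" shows "deriv (R s) y = 1"
proof -
  have "(R s has_real_derivative 1) (at y)"
    by (rule has_field_derivative_transform_within_open[OF DERIV_ident, where S="{BB / s<..}"])
       (use assms R_eq_id in auto)
  then show ?thesis by (rule DERIV_imp_deriv)
qed

lemma deriv_R_eq_0:
  assumes "s \<ge> 1" "y < AA / s" shows "deriv (R s) y = 0"
proof -
  have "(R s has_real_derivative 0) (at y)"
    by (rule has_field_derivative_transform_within_open[OF DERIV_const, where S="{..<AA / s}"])
       (use assms R_eq_0 in auto)
  then show ?thesis by (rule DERIV_imp_deriv)
qed

lemma act_r_abs_le: "r \<ge> 1 \<Longrightarrow> \<bar>act_r R r k y\<bar> \<le> \<bar>y\<bar>"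
  unfolding act_r_def by (rule R_abs_le[OF powr_ge_1])

lemma dact_r_abs_le: "r \<ge> 1 \<Longrightarrow> \<bar>dact_r r k y\<bar> \<le> C"
  unfolding dact_r_def by (rule deriv_R_bound[OF powr_ge_1])

lemma act_r_has_real_derivative: "r \<ge> 1 \<Longrightarrow> (act_r R r k has_real_derivative dact_r r k y) (at y)"
  unfolding act_r_def dact_r_def by (rule R_has_real_derivative[OF powr_ge_1])

lemma act_r_measurable: "r \<ge> 1 \<Longrightarrow> act_r R r k \<in> borel_measurable borel"
  using act_r_has_real_derivative
  by (intro borel_measurable_continuous_onI DERIV_continuous_on) (auto intro: has_field_derivative_at_within)

lemma dact_r_measurable: "r \<ge> 1 \<Longrightarrow> dact_r r k \<in> borel_measurable borel"
  unfolding dact_r_def by (intro borel_measurable_continuous_onI deriv_R_continuous powr_ge_1)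

lemma act_r_act_inf_dist:
  assumes "r \<ge> 1"
  shows "\<bar>act_r R r k a - act_inf k b\<bar> \<le> C * \<bar>a - b\<bar> + BB * r powr (- 1 / real k)"
proof -
  define s where "s = r powr (1 / real k)"
  have s: "s \<ge> 1" unfolding s_def using powr_ge_1[OF assms] .
  have "\<bar>R s a - max b 0\<bar> \<le> \<bar>R s a - R s b\<bar> + \<bar>R s b - max b 0\<bar>" by simp
  also have "\<dots> \<le> C * \<bar>a - b\<bar> + BB / s"
    using R_lipschitz[OF s] R_relu_dist[OF s] by (rule add_mono)
  also have "BB / s = BB * r powr (- 1 / real k)" unfolding s_def by (simp add: powr_minus_divide)
  finally show ?thesis unfolding act_r_def act_inf_def s_def .
qed

text \<open>The activation of layer \<open>k\<close> is within \<open>O(r^(-1/k))\<close> of ReLU, so the output of layer \<open>k + 1\<close>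
  converges at that rate.\<close>
lemma net_act_r_rate:
  "\<exists>K. \<forall>r\<ge>1. \<bar>net ls idx idx0 (act_r R r) \<theta> (Suc k) x i - net ls idx idx0 act_inf \<theta> (Suc k) x i\<bar>
            \<le> K * r powr (- 1 / real k)"
proof (induction k arbitrary: i)
  case 0
  show ?case by (rule exI[of _ 0]) simp
next
  case (Suc k)
  let ?a = "\<lambda>r j. net ls idx idx0 (act_r R r) \<theta> (Suc k) x j" and ?b = "\<lambda>j. net ls idx idx0 act_inf \<theta> (Suc k) x j"
  let ?e = "\<lambda>r. r powr (- 1 / real (Suc k))" and ?w = "\<lambda>j. wt ls idx \<theta> (Suc (Suc k)) i j"
  obtain Kf where Kf: "\<And>j r. r \<ge> 1 \<Longrightarrow> \<bar>?a r j - ?b j\<bar> \<le> Kf j * r powr (- 1 / real k)"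
    using Suc.IH by metis
  have act: "\<bar>act_r R r (Suc k) (?a r j) - act_inf (Suc k) (?b j)\<bar> \<le> (C * \<bar>Kf j\<bar> + BB) * ?e r"
    if r: "r \<ge> 1" for r j
  proof -
    have "\<bar>?a r j - ?b j\<bar> \<le> \<bar>Kf j\<bar> * ?e r"
    proof (cases k)
      case (Suc k')
      have "\<bar>?a r j - ?b j\<bar> \<le> \<bar>Kf j\<bar> * r powr (- 1 / real k)"
        using Kf[OF r, of j] by (meson abs_ge_self mult_right_mono order_trans powr_ge_zero)
      also have "\<dots> \<le> \<bar>Kf j\<bar> * ?e r"
        using r Suc by (intro mult_left_mono powr_mono) (auto simp: field_simps)
      finally show ?thesis .
    qed simp
    then show ?thesis
      using act_r_act_inf_dist[OF r, of "Suc k" "?a r j" "?b j"] C_nonneg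
      by (smt (verit, best) mult.assoc mult_left_mono distrib_right)
  qed
  show ?case
  proof (intro exI allI impI)
    fix r :: real assume r: "r \<ge> 1"
    have "\<bar>net ls idx idx0 (act_r R r) \<theta> (Suc (Suc k)) x i - net ls idx idx0 act_inf \<theta> (Suc (Suc k)) x i\<bar>
        = \<bar>\<Sum>j=1..ls (Suc k). ?w j * (act_r R r (Suc k) (?a r j) - act_inf (Suc k) (?b j))\<bar>"
      by (simp add: sum_subtractf right_diff_distrib)
    also have "\<dots> \<le> (\<Sum>j=1..ls (Suc k). \<bar>?w j\<bar> * ((C * \<bar>Kf j\<bar> + BB) * ?e r))"
      by (rule order_trans[OF sum_abs], rule sum_mono) (simp only: abs_mult, rule mult_left_mono[OF act[OF r] abs_ge_zero])
    also have "\<dots> = (\<Sum>j=1..ls (Suc k). \<bar>?w j\<bar> * (C * \<bar>Kf j\<bar> + BB)) * ?e r"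
      by (simp add: sum_distrib_right mult.assoc)
    finally show "\<bar>net ls idx idx0 (act_r R r) \<theta> (Suc (Suc k)) x i - net ls idx idx0 act_inf \<theta> (Suc (Suc k)) x i\<bar>
        \<le> (\<Sum>j=1..ls (Suc k). \<bar>?w j\<bar> * (C * \<bar>Kf j\<bar> + BB)) * ?e r" .
  qed
qed

lemma net_act_r_tendsto:
  "((\<lambda>r. net ls idx idx0 (act_r R r) \<theta> k x i) \<longlongrightarrow> net ls idx idx0 act_inf \<theta> k x i) at_top"
proof (cases "k \<le> 1")
  case True
  then have "k = 0 \<or> k = 1" by auto
  then show ?thesis by auto
next
  case False
  then obtain k0 where k: "k = Suc k0" "k0 \<ge> 1" by (cases k) auto
  obtain K where K: "\<And>r. r \<ge> 1 \<Longrightarrow> \<bar>net ls idx idx0 (act_r R r) \<theta> k x i - net ls idx idx0 act_inf \<theta> k x i\<bar>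
      \<le> K * r powr (- 1 / real k0)"
    using net_act_r_rate[of ls idx idx0 \<theta> k0 x i] k by auto
  have "((\<lambda>r. net ls idx idx0 (act_r R r) \<theta> k x i - net ls idx idx0 act_inf \<theta> k x i) \<longlongrightarrow> 0) at_top"
  proof (rule Lim_null_comparison)
    show "\<forall>\<^sub>F r in at_top. norm (net ls idx idx0 (act_r R r) \<theta> k x i - net ls idx idx0 act_inf \<theta> k x i)
        \<le> K * r powr (- 1 / real k0)"
      using eventually_ge_at_top[of "1::real"] by eventually_elim (use K in auto)
    show "((\<lambda>r. K * r powr (- 1 / real k0)) \<longlongrightarrow> 0) at_top"
      using tendsto_mult_right_zero[OF powr_neg_tendsto_0[OF k(2)]] by simp
  qed
  then show ?thesis by (rule LIM_zero_cancel)
qed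

lemma act_r_net_tendsto:
  assumes "k \<ge> 1"
  shows "((\<lambda>r. act_r R r k (net ls idx idx0 (act_r R r) \<theta> k x j)) \<longlongrightarrow> act_inf k (net ls idx idx0 act_inf \<theta> k x j)) at_top"
proof -
  let ?a = "\<lambda>r. net ls idx idx0 (act_r R r) \<theta> k x j" and ?b = "net ls idx idx0 act_inf \<theta> k x j"
  have "((\<lambda>r. act_r R r k (?a r) - act_inf k ?b) \<longlongrightarrow> 0) at_top"
  proof (rule Lim_null_comparison)
    show "\<forall>\<^sub>F r in at_top. norm (act_r R r k (?a r) - act_inf k ?b) \<le> C * \<bar>?a r - ?b\<bar> + BB * r powr (- 1 / real k)"
      using eventually_ge_at_top[of "1::real"] by eventually_elim (use act_r_act_inf_dist in auto)
    have "((\<lambda>r. ?a r - ?b) \<longlongrightarrow> 0) at_top"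
      by (rule LIM_zero[OF net_act_r_tendsto])
    then show "((\<lambda>r. C * \<bar>?a r - ?b\<bar> + BB * r powr (- 1 / real k)) \<longlongrightarrow> 0) at_top"
      using tendsto_add_zero[OF tendsto_mult_right_zero[OF tendsto_rabs_zero]
          tendsto_mult_right_zero[OF powr_neg_tendsto_0[OF assms]]] by blast
  qed
  then show ?thesis by (rule LIM_zero_cancel)
qed

text \<open>If the ReLU network vanishes at a neuron of layer \<open>k\<close>, the smoothed one is eventually below the
  threshold \<open>AA / r^(1/k)\<close> where the smoothed activation is flat: it converges at the faster rate
  \<open>r^(-1/(k-1))\<close>.\<close>
lemma net_act_r_eventually_flat:
  assumes k: "k \<ge> 1" and zero: "net ls idx idx0 act_inf \<theta> k x j = 0"
  shows "\<forall>\<^sub>F r in at_top. net ls idx idx0 (act_r R r) \<theta> k x j < AA / r powr (1 / real k)"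
proof -
  let ?a = "\<lambda>r. net ls idx idx0 (act_r R r) \<theta> k x j"
  obtain k' where k': "k = Suc k'" using k by (cases k) auto
  have thr: "AA / r powr (1 / real k) = AA * r powr (- 1 / real k)" for r
    by (simp add: powr_minus_divide)
  show ?thesis
  proof (cases k')
    case 0
    then show ?thesis using zero AA_pos k' by (intro eventually_at_top_linorderI[of 1]) simp
  next
    case (Suc k'')
    obtain K where K: "\<And>r. r \<ge> 1 \<Longrightarrow> \<bar>?a r\<bar> \<le> K * r powr (- 1 / real k')"
      using net_act_r_rate[of ls idx idx0 \<theta> k' x j] k' zero by auto
    define e where "e = - 1 / real k' + 1 / real k"
    have "1 / real k < 1 / real k'" using Suc k' by (intro frac_less2) auto
    then have "e < 0" unfolding e_def by simp
    then have "((\<lambda>r. \<bar>K\<bar> * r powr e) \<longlongrightarrow> 0) at_top"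
      using tendsto_mult_right_zero[OF tendsto_neg_powr[OF _ filterlim_ident]] by simp
    then have "\<forall>\<^sub>F r in at_top. \<bar>K\<bar> * r powr e < AA" using AA_pos by (simp add: order_tendstoD)
    then show ?thesis using eventually_ge_at_top[of "1::real"]
    proof eventually_elim
      case (elim r)
      have "?a r \<le> \<bar>K\<bar> * r powr (- 1 / real k')"
        using K[OF elim(2)] by (meson abs_ge_self abs_ge_zero mult_right_mono order_trans powr_ge_zero)
      also have "r powr (- 1 / real k') = r powr e * r powr (- 1 / real k)"
        using elim(2) unfolding e_def by (simp add: powr_add[symmetric])
      also have "\<bar>K\<bar> * (r powr e * r powr (- 1 / real k)) < AA * r powr (- 1 / real k)"
        using elim by (simp add: mult.assoc[symmetric])
      finally show ?case by (simp add: thr)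
    qed
  qed
qed

lemma dact_r_net_tendsto:
  assumes k: "k \<ge> 1"
  shows "((\<lambda>r. dact_r r k (net ls idx idx0 (act_r R r) \<theta> k x j)) \<longlongrightarrow> relu_deriv k (net ls idx idx0 act_inf \<theta> k x j)) at_top"
proof -
  let ?a = "\<lambda>r. net ls idx idx0 (act_r R r) \<theta> k x j" and ?\<nu> = "net ls idx idx0 act_inf \<theta> k x j"
  let ?s = "\<lambda>r::real. r powr (1 / real k)"
  have a_lim: "(?a \<longlongrightarrow> ?\<nu>) at_top" by (rule net_act_r_tendsto)
  consider "?\<nu> > 0" | "?\<nu> \<le> 0" by linarith
  then show ?thesis
  proof cases
    case 1
    have "((\<lambda>r. ?a r - BB * r powr (- 1 / real k)) \<longlongrightarrow> ?\<nu> - BB * 0) at_top"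
      by (intro tendsto_intros a_lim powr_neg_tendsto_0 k)
    then have "\<forall>\<^sub>F r in at_top. 0 < ?a r - BB * r powr (- 1 / real k)"
      using 1 by (intro order_tendstoD(1)) simp_all
    then have "\<forall>\<^sub>F r in at_top. dact_r r k (?a r) = 1"
      using eventually_ge_at_top[of "1::real"]
      by eventually_elim (auto simp: dact_r_def powr_minus_divide intro!: deriv_R_eq_1[OF powr_ge_1])
    then show ?thesis using 1 by (simp add: relu_deriv_def tendsto_eventually)
  next
    case 2
    have "\<forall>\<^sub>F r in at_top. ?a r < AA / ?s r"
    proof (cases "?\<nu> = 0")
      case True
      then show ?thesis by (rule net_act_r_eventually_flat[OF k])
    next
      case False
      then have "\<forall>\<^sub>F r in at_top. ?a r < 0" using a_lim 2 by (simp add: order_tendstoD)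
      then show ?thesis using eventually_ge_at_top[of "1::real"]
        by eventually_elim (use AA_pos in \<open>smt (verit) divide_pos_pos powr_gt_zero\<close>)
    qed
    then have "\<forall>\<^sub>F r in at_top. dact_r r k (?a r) = 0"
      using eventually_ge_at_top[of "1::real"]
      by eventually_elim (auto simp: dact_r_def intro!: deriv_R_eq_0[OF powr_ge_1])
    then show ?thesis using 2 by (simp add: relu_deriv_def tendsto_eventually)
  qed
qed

lemma dnet_act_r_tendsto:
  "((\<lambda>r. dnet ls idx idx0 (act_r R r) (dact_r r) \<theta> k x h i) \<longlongrightarrow> dnet ls idx idx0 act_inf relu_deriv \<theta> k x h i) at_top"
proof (induction k arbitrary: i rule: induct_nat_012)
  case (ge2 k)
  show ?case unfolding dnet.simps
    by (intro tendsto_intros ge2(2) act_r_net_tendsto dact_r_net_tendsto) auto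
qed simp_all

end

section \<open>The generalized gradient of the ReLU loss\<close>

lemma linear_eq_inner_vec:
  fixes g :: "real^'k \<Rightarrow> real"
  assumes "linear g"
  shows "g h = (\<chi> c. g (axis c 1)) \<bullet> h"
proof -
  have "g h = g (\<Sum>c\<in>UNIV. h $ c *\<^sub>R axis c 1)" using basis_expansion[of h] by (simp add: scalar_mult_eq_scaleR)
  also have "\<dots> = (\<Sum>c\<in>UNIV. h $ c * g (axis c 1))" using assms by (simp add: linear_sum linear_scale)
  also have "\<dots> = (\<chi> c. g (axis c 1)) \<bullet> h" by (simp add: inner_vec_def mult.commute)
  finally show ?thesis .
qed

locale relu_net_loss = relu_smoothing R AA BB C
  for R :: "real \<Rightarrow> real \<Rightarrow> real" and AA BB C :: real +
  fixes L :: nat and ls :: "nat \<Rightarrow> nat" and a b :: real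
    and idx :: "nat \<Rightarrow> 'n::finite" and idx0 :: "nat \<Rightarrow> 'm::finite"
    and \<mu> :: "(real^'m) measure" and f :: "real^'m \<Rightarrow> nat \<Rightarrow> real"
    and G :: "real^'n \<Rightarrow> real^'n"
  assumes L_pos: "L \<ge> 1"
    and idx_bij: "bij_betw idx {1..dd ls L} UNIV"
    and \<mu>_sets: "sets \<mu> = sets (restrict_space borel (cbox (\<chi> _. a) (\<chi> _. b)))"
    and \<mu>_finite: "emeasure \<mu> (space \<mu>) \<noteq> \<infinity>"
    and f_measurable: "\<And>i. i \<in> {1..ls L} \<Longrightarrow> (\<lambda>x. f x i) \<in> borel_measurable borel"
    and integrable_err_r: "\<And>r \<theta>. r \<ge> 1 \<Longrightarrow> integrable \<mu> (err ls L idx idx0 (act_r R r) f \<theta>)"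
    and integrable_err: "\<And>\<theta>. integrable \<mu> (err ls L idx idx0 act_inf f \<theta>)"
    and G_def: "\<forall>\<theta> g gs. (\<forall>r\<ge>1. (loss \<mu> ls L idx idx0 (act_r R r) f has_derivative (\<lambda>h. gs r \<bullet> h)) (at \<theta>))
                  \<and> (gs \<longlongrightarrow> g) at_top \<longrightarrow> G \<theta> = g"
    and f_const: "\<And>x i. x \<in> cbox (\<chi> _. a) (\<chi> _. b) \<Longrightarrow> i \<in> {1..ls L} \<Longrightarrow> f x i = f 0 i"
begin

definition "input_bound = 1 + real (ls 0) * (max \<bar>a\<bar> \<bar>b\<bar>)\<^sup>2"
definition "target_sqnorm = (\<Sum>i=1..ls L. (f 0 i)\<^sup>2)"
definition "mass = measure \<mu> (space \<mu>)"
definition "relu_loss \<theta> = loss \<mu> ls L idx idx0 act_inf f \<theta>"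
definition "dloss act act' \<theta> h = (\<integral>x. err_deriv ls L idx idx0 act act' f \<theta> x h \<partial>\<mu>)"
definition "err_deriv_const \<rho> c = 2 * sqrt ((2 * (1 + \<rho>\<^sup>2) ^ L * input_bound + 2 * target_sqnorm)
     * (real L * (max 1 (c\<^sup>2)) ^ (L - 1) * (1 + \<rho>\<^sup>2) ^ (L - 1) * input_bound))"

lemma space_\<mu>: "space \<mu> = cbox (\<chi> _. a) (\<chi> _. b)"
  using sets_eq_imp_space_eq[OF \<mu>_sets] by (simp add: space_restrict_space)

lemma finite_measure_\<mu>: "finite_measure \<mu>"
  using \<mu>_finite by (intro finite_measureI) auto

lemma borel_measurable_\<mu>: "g \<in> borel_measurable borel \<Longrightarrow> g \<in> borel_measurable \<mu>"
  unfolding measurable_cong_sets[OF \<mu>_sets refl] by (rule measurable_restrict_space1)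

lemma input_sq_le:
  assumes "x \<in> space \<mu>" shows "1 + (\<Sum>j=1..ls 0. (x $ idx0 j)\<^sup>2) \<le> input_bound"
proof -
  have "(x $ c)\<^sup>2 \<le> (max \<bar>a\<bar> \<bar>b\<bar>)\<^sup>2" for c
  proof -
    have "a \<le> x $ c" "x $ c \<le> b" using assms unfolding space_\<mu> mem_box_cart(2) by auto
    then show ?thesis by (simp add: abs_le_square_iff[symmetric])
  qed
  then have "(\<Sum>j=1..ls 0. (x $ idx0 j)\<^sup>2) \<le> (\<Sum>j=1..ls 0. (max \<bar>a\<bar> \<bar>b\<bar>)\<^sup>2)" by (intro sum_mono) auto
  then show ?thesis unfolding input_bound_def by simp
qed

lemma target_eq: "x \<in> space \<mu> \<Longrightarrow> i \<in> {1..ls L} \<Longrightarrow> f x i = f 0 i"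
  using f_const space_\<mu> by auto

lemma err_deriv_le:
  assumes "x \<in> space \<mu>" "norm \<theta> \<le> \<rho>"
    and "\<And>k y. \<bar>act k y\<bar> \<le> \<bar>y\<bar>" "\<And>k y. \<bar>act' k y\<bar> \<le> c"
  shows "\<bar>err_deriv ls L idx idx0 act act' f \<theta> x h\<bar> \<le> err_deriv_const \<rho> c * norm h"
  unfolding err_deriv_const_def
  by (rule err_deriv_bound[OF idx_bij L_pos assms(3,4) input_sq_le[OF assms(1)] _ assms(2)])
     (simp add: target_eq[OF assms(1)] target_sqnorm_def)

lemma err_deriv_\<mu>_measurable:
  "\<lbrakk>\<And>k. act k \<in> borel_measurable borel; \<And>k. act' k \<in> borel_measurable borel\<rbrakk>
    \<Longrightarrow> (\<lambda>x. err_deriv ls L idx idx0 act act' f \<theta> x h) \<in> borel_measurable \<mu>"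
  by (intro borel_measurable_\<mu> err_deriv_measurable f_measurable)

lemma loss_act_r_has_derivative:
  assumes r: "r \<ge> 1"
  shows "(loss \<mu> ls L idx idx0 (act_r R r) f has_derivative dloss (act_r R r) (dact_r r) \<theta>0) (at \<theta>0)"
proof -
  have "((\<lambda>\<theta>. \<integral>x. err ls L idx idx0 (act_r R r) f \<theta> x \<partial>\<mu>) has_derivative
     (\<lambda>h. \<integral>x. err_deriv ls L idx idx0 (act_r R r) (dact_r r) f \<theta>0 x h \<partial>\<mu>)) (at \<theta>0)"
  proof (rule has_derivative_integral[OF finite_measure_\<mu>, where B="err_deriv_const (norm \<theta>0 + 1) C"])
    show "integrable \<mu> (\<lambda>x. err ls L idx idx0 (act_r R r) f \<theta> x)" for \<theta>
      using integrable_err_r[OF r] by simp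
    show "(\<lambda>x. err_deriv ls L idx idx0 (act_r R r) (dact_r r) f \<theta>0 x h) \<in> borel_measurable \<mu>" for h
      using act_r_measurable[OF r] dact_r_measurable[OF r] by (rule err_deriv_\<mu>_measurable)
    show "((\<lambda>\<theta>. err ls L idx idx0 (act_r R r) f \<theta> x) has_derivative
        err_deriv ls L idx idx0 (act_r R r) (dact_r r) f \<theta> x) (at \<theta>)" for x \<theta>
      using act_r_has_real_derivative[OF r] by (rule err_has_derivative)
    show "\<bar>err_deriv ls L idx idx0 (act_r R r) (dact_r r) f \<theta> x h\<bar> \<le> err_deriv_const (norm \<theta>0 + 1) C * norm h"
      if "x \<in> space \<mu>" "\<theta> \<in> cball \<theta>0 1" for x \<theta> h
      using that norm_triangle_sub[of \<theta> \<theta>0] act_r_abs_le[OF r] dact_r_abs_le[OF r]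
      by (intro err_deriv_le) (auto simp: dist_norm norm_minus_commute)
  qed
  then show ?thesis unfolding dloss_def by (simp add: loss_def[abs_def])
qed

lemma dloss_act_r_tendsto:
  "((\<lambda>r. dloss (act_r R r) (dact_r r) \<theta> h) \<longlongrightarrow> dloss act_inf relu_deriv \<theta> h) at_top"
proof -
  define S where "S t x = err_deriv ls L idx idx0 (act_r R (max t 1)) (dact_r (max t 1)) f \<theta> x h" for t x
  have "((\<lambda>t. integral\<^sup>L \<mu> (S t)) \<longlongrightarrow> dloss act_inf relu_deriv \<theta> h) at_top"
    unfolding dloss_def
  proof (rule integral_dominated_convergence_at_top[where w="\<lambda>_. err_deriv_const (norm \<theta>) C * norm h"])
    show "(\<lambda>x. err_deriv ls L idx idx0 act_inf relu_deriv f \<theta> x h) \<in> borel_measurable \<mu>"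
      using act_inf_measurable relu_deriv_measurable by (rule err_deriv_\<mu>_measurable)
    show "S t \<in> borel_measurable \<mu>" for t
      unfolding S_def using act_r_measurable dact_r_measurable by (intro err_deriv_\<mu>_measurable) auto
    show "integrable \<mu> (\<lambda>_. err_deriv_const (norm \<theta>) C * norm h)"
      using finite_measure_\<mu> by (simp add: finite_measure.integrable_const)
    show "AE x in \<mu>. ((\<lambda>t. S t x) \<longlongrightarrow> err_deriv ls L idx idx0 act_inf relu_deriv f \<theta> x h) at_top"
    proof (rule AE_I2)
      fix x
      have "((\<lambda>r. err_deriv ls L idx idx0 (act_r R r) (dact_r r) f \<theta> x h)
          \<longlongrightarrow> err_deriv ls L idx idx0 act_inf relu_deriv f \<theta> x h) at_top"
        unfolding err_deriv_def by (intro tendsto_intros net_act_r_tendsto dnet_act_r_tendsto)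
      moreover have "\<forall>\<^sub>F t in at_top. err_deriv ls L idx idx0 (act_r R t) (dact_r t) f \<theta> x h = S t x"
        using eventually_ge_at_top[of "1::real"] by eventually_elim (simp add: S_def max_def)
      ultimately show "((\<lambda>t. S t x) \<longlongrightarrow> err_deriv ls L idx idx0 act_inf relu_deriv f \<theta> x h) at_top"
        by (rule Lim_transform_eventually)
    qed
    show "\<forall>\<^sub>F t in at_top. AE x in \<mu>. norm (S t x) \<le> err_deriv_const (norm \<theta>) C * norm h"
      unfolding S_def real_norm_def
      by (intro always_eventually allI AE_I2 err_deriv_le act_r_abs_le dact_r_abs_le) auto
  qed
  moreover have "\<forall>\<^sub>F t in at_top. integral\<^sup>L \<mu> (S t) = dloss (act_r R t) (dact_r t) \<theta> h"
    using eventually_ge_at_top[of "1::real"]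
    by eventually_elim (simp add: S_def[abs_def] dloss_def max_absorb1)
  ultimately show ?thesis by (rule Lim_transform_eventually)
qed

text \<open>The gradients of the smoothed losses converge at every \<open>\<theta>\<close>, so \<open>G\<close> is their limit.\<close>
lemma inner_G: "G \<theta> \<bullet> h = dloss act_inf relu_deriv \<theta> h"
proof -
  define gs where "gs r = (\<chi> c. dloss (act_r R r) (dact_r r) \<theta> (axis c 1))" for r
  define g where "g = (\<chi> c. dloss act_inf relu_deriv \<theta> (axis c 1))"
  have eq: "dloss (act_r R r) (dact_r r) \<theta> = (\<lambda>h. gs r \<bullet> h)" if "r \<ge> 1" for r
    using linear_eq_inner_vec has_derivative_linear[OF loss_act_r_has_derivative[OF that]]
    unfolding gs_def by auto
  have lim: "(gs \<longlongrightarrow> g) at_top"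
    unfolding gs_def g_def by (intro tendsto_vec_lambda dloss_act_r_tendsto)
  have "G \<theta> = g"
  proof (rule G_def[rule_format], intro conjI allI impI)
    fix r :: real assume "r \<ge> 1"
    show "(loss \<mu> ls L idx idx0 (act_r R r) f has_derivative (\<lambda>h. gs r \<bullet> h)) (at \<theta>)"
      using loss_act_r_has_derivative[OF \<open>r \<ge> 1\<close>, of \<theta>] eq[OF \<open>r \<ge> 1\<close>] by simp
  qed (rule lim)
  moreover have "((\<lambda>r. gs r \<bullet> h) \<longlongrightarrow> g \<bullet> h) at_top" by (intro tendsto_intros lim)
  moreover have "((\<lambda>r. gs r \<bullet> h) \<longlongrightarrow> dloss act_inf relu_deriv \<theta> h) at_top"
    using dloss_act_r_tendsto eventually_ge_at_top[of "1::real"]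
    by (rule Lim_transform_eventually[OF _ eventually_mono]) (simp add: eq)
  ultimately show ?thesis by (metis tendsto_unique trivial_limit_at_top_linorder)
qed

end

section \<open>The Lyapunov function \<open>V\<close>\<close>

definition param_layer :: "(nat \<Rightarrow> nat) \<Rightarrow> nat \<Rightarrow> nat" where
  "param_layer ls p = (LEAST k. p \<le> dd ls k)"

lemma param_layer_eq:
  assumes "k \<ge> 1" "dd ls (k - 1) < p" "p \<le> dd ls k"
  shows "param_layer ls p = k"
  unfolding param_layer_def
proof (rule Least_equality)
  fix k' assume "p \<le> dd ls k'"
  show "k \<le> k'"
  proof (rule ccontr)
    assume "\<not> k \<le> k'"
    then have "dd ls k' \<le> dd ls (k - 1)" by (intro dd_mono) simp
    with assms \<open>p \<le> dd ls k'\<close> show False by simp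
  qed
qed fact

text \<open>The gradient of \<open>V\<close>: \<open>2 k b\<^sub>k\<close> in the biases of layer \<open>k\<close> (shifted by \<open>- 2 L \<xi>\<close> in the output layer)
  and \<open>2 w\<^sub>k\<close> in the weights. Position \<open>p\<close> of layer \<open>k\<close> holds a bias iff it lies beyond the
  \<open>ls k * ls (k - 1)\<close> weights of that layer.\<close>
definition grad_V :: "(nat \<Rightarrow> nat) \<Rightarrow> nat \<Rightarrow> (nat \<Rightarrow> 'n) \<Rightarrow> (nat \<Rightarrow> real) \<Rightarrow> real^'n \<Rightarrow> real^'n" where
  "grad_V ls L idx \<xi> \<theta> = (\<chi> c. (let p = inv_into {1..dd ls L} idx c; k = param_layer ls p in
      if p > dd ls (k - 1) + ls k * ls (k - 1)
      then 2 * real k * \<theta> $ c - (if k = L then 2 * real L * \<xi> (p - dd ls (k - 1) - ls k * ls (k - 1)) else 0)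
      else 2 * \<theta> $ c))"

lemma bs_grad_V:
  assumes bij: "bij_betw idx {1..dd ls L} (UNIV :: 'n::finite set)" and k: "k \<in> {1..L}" and i: "i \<in> {1..ls k}"
  shows "bs ls idx (grad_V ls L idx \<xi> (\<theta>::real^'n)) k i
           = 2 * real k * bs ls idx \<theta> k i - (if k = L then 2 * real L * \<xi> i else 0)"
proof -
  let ?p = "ls k * ls (k - 1) + i + dd ls (k - 1)"
  have p: "dd ls (k - 1) + ls k * ls (k - 1) < ?p" "?p \<le> dd ls k"
    using k i dd_pred[of k ls] by (auto simp: algebra_simps)
  then have "?p \<in> {1..dd ls L}" using dd_mono[of k L ls] k by auto
  then have inv: "inv_into {1..dd ls L} idx (idx ?p) = ?p" using bij by (simp add: bij_betw_def inv_into_f_f)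
  have layer: "param_layer ls ?p = k" using param_layer_eq[of k ls ?p] p k by auto
  show ?thesis unfolding bs_def grad_V_def vec_lambda_beta Let_def inv layer using p by simp
qed

lemma wt_grad_V:
  assumes bij: "bij_betw idx {1..dd ls L} (UNIV :: 'n::finite set)" and k: "k \<in> {1..L}" and i: "i \<in> {1..ls k}"
    and j: "j \<in> {1..ls (k - 1)}"
  shows "wt ls idx (grad_V ls L idx \<xi> (\<theta>::real^'n)) k i j = 2 * wt ls idx \<theta> k i j"
proof -
  let ?p = "(i - 1) * ls (k - 1) + j + dd ls (k - 1)"
  have "(i - 1) * ls (k - 1) + ls (k - 1) \<le> ls k * ls (k - 1)"
    using i by (cases "ls k") (auto simp: mult_le_mono1)
  then have p: "dd ls (k - 1) < ?p" "?p \<le> dd ls (k - 1) + ls k * ls (k - 1)" "?p \<le> dd ls k"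
    using j dd_pred[of k ls] k by auto
  then have "?p \<in> {1..dd ls L}" using dd_mono[of k L ls] k j by auto
  then have inv: "inv_into {1..dd ls L} idx (idx ?p) = ?p" using bij by (simp add: bij_betw_def inv_into_f_f)
  have layer: "param_layer ls ?p = k" using param_layer_eq[of k ls ?p] p k by auto
  show ?thesis unfolding wt_def grad_V_def vec_lambda_beta Let_def inv layer using p by simp
qed

definition weighted_inner :: "(nat \<Rightarrow> nat) \<Rightarrow> nat \<Rightarrow> (nat \<Rightarrow> 'n) \<Rightarrow> real^'n \<Rightarrow> real^'n \<Rightarrow> real" where
  "weighted_inner ls L idx u w =
     (\<Sum>k=1..L. real k * (\<Sum>i=1..ls k. bs ls idx u k i * bs ls idx w k i)
              + (\<Sum>i=1..ls k. \<Sum>j=1..ls (k - 1). wt ls idx u k i j * wt ls idx w k i j))"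

lemma Vfun_eq_weighted_inner:
  "Vfun ls L idx \<xi> \<theta> = weighted_inner ls L idx \<theta> \<theta> - 2 * real L * (\<Sum>i=1..ls L. \<xi> i * bs ls idx \<theta> L i)"
  unfolding Vfun_def weighted_inner_def by (simp add: power2_eq_square)

lemma weighted_inner_diff_scaleR:
  "weighted_inner ls L idx (\<theta> - \<gamma> *\<^sub>R g) (\<theta> - \<gamma> *\<^sub>R g)
     = weighted_inner ls L idx \<theta> \<theta> - 2 * \<gamma> * weighted_inner ls L idx \<theta> g + \<gamma>\<^sup>2 * weighted_inner ls L idx g g"
  unfolding weighted_inner_def bs_diff bs_scaleR wt_diff wt_scaleR
  by (simp add: algebra_simps power2_eq_square sum.distrib sum_subtractf sum_distrib_left)

lemma inner_grad_V:
  assumes "bij_betw idx {1..dd ls L} (UNIV :: 'n::finite set)" "L \<ge> 1"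
  shows "g \<bullet> grad_V ls L idx \<xi> (\<theta>::real^'n)
           = 2 * weighted_inner ls L idx \<theta> g - 2 * real L * (\<Sum>i=1..ls L. \<xi> i * bs ls idx g L i)"
proof -
  have "g \<bullet> grad_V ls L idx \<xi> \<theta>
      = (\<Sum>k=1..L. (\<Sum>i=1..ls k. 2 * real k * bs ls idx \<theta> k i * bs ls idx g k i)
                + (\<Sum>i=1..ls k. \<Sum>j=1..ls (k - 1). 2 * wt ls idx \<theta> k i j * wt ls idx g k i j)
                - (if k = L then 2 * real L * (\<Sum>i=1..ls L. \<xi> i * bs ls idx g L i) else 0))"
    unfolding inner_eq_sum_layers[OF assms(1)]
    by (intro sum.cong refl)
       (simp add: bs_grad_V[OF assms(1)] wt_grad_V[OF assms(1)] algebra_simps sum_subtractf sum_distrib_left)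
  also have "\<dots> = 2 * weighted_inner ls L idx \<theta> g - 2 * real L * (\<Sum>i=1..ls L. \<xi> i * bs ls idx g L i)"
    using assms(2) unfolding weighted_inner_def
    by (simp add: sum_subtractf sum.distrib sum_distrib_left algebra_simps)
  finally show ?thesis .
qed

lemma Vfun_step:
  assumes "bij_betw idx {1..dd ls L} (UNIV :: 'n::finite set)" "L \<ge> 1"
  shows "Vfun ls L idx \<xi> ((\<theta>::real^'n) - \<gamma> *\<^sub>R g)
           = Vfun ls L idx \<xi> \<theta> - \<gamma> * (g \<bullet> grad_V ls L idx \<xi> \<theta>) + \<gamma>\<^sup>2 * weighted_inner ls L idx g g"
  unfolding Vfun_eq_weighted_inner weighted_inner_diff_scaleR inner_grad_V[OF assms] bs_diff bs_scaleR
  by (simp add: algebra_simps sum_subtractf sum_distrib_left)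

lemma weighted_inner_self_le:
  assumes "bij_betw idx {1..dd ls L} (UNIV :: 'n::finite set)"
  shows "weighted_inner ls L idx g g \<le> real L * (norm (g::real^'n))\<^sup>2"
proof -
  have "weighted_inner ls L idx g g \<le> (\<Sum>k=1..L. real L * layer_sqnorm ls idx g k)"
    unfolding weighted_inner_def
  proof (intro sum_mono)
    fix k assume k: "k \<in> {1..L}"
    let ?B = "\<Sum>i=1..ls k. (bs ls idx g k i)\<^sup>2" and ?W = "\<Sum>i=1..ls k. \<Sum>j=1..ls (k - 1). (wt ls idx g k i j)\<^sup>2"
    have "real k * ?B \<le> real L * ?B" using k by (intro mult_right_mono) (auto intro: sum_nonneg)
    moreover have "1 * ?W \<le> real L * ?W" using k by (intro mult_right_mono) (auto intro!: sum_nonneg)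
    ultimately show "real k * (\<Sum>i=1..ls k. bs ls idx g k i * bs ls idx g k i)
        + (\<Sum>i=1..ls k. \<Sum>j=1..ls (k - 1). wt ls idx g k i j * wt ls idx g k i j)
        \<le> real L * layer_sqnorm ls idx g k"
      unfolding layer_sqnorm_def by (simp add: power2_eq_square distrib_left)
  qed
  also have "\<dots> = real L * (norm g)\<^sup>2" by (simp add: norm_sq_eq_sum_layer_sqnorm[OF assms] sum_distrib_left)
  finally show ?thesis .
qed

text \<open>Completing the square in the output biases: \<open>\<bar>b\<^sub>L\<bar>\<^sup>2 - 4 L \<langle>\<xi>, b\<^sub>L\<rangle> + 4 L\<^sup>2 \<bar>\<xi>\<bar>\<^sup>2 = \<bar>b\<^sub>L - 2 L \<xi>\<bar>\<^sup>2\<close>.\<close>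
lemma norm_sq_le_Vfun:
  assumes bij: "bij_betw idx {1..dd ls L} (UNIV :: 'n::finite set)" and L: "L \<ge> 1"
  shows "(norm (\<theta>::real^'n))\<^sup>2 \<le> 2 * Vfun ls L idx \<xi> \<theta> + 4 * (real L)\<^sup>2 * (\<Sum>i=1..ls L. (\<xi> i)\<^sup>2)"
proof -
  let ?B = "\<lambda>k. \<Sum>i=1..ls k. (bs ls idx \<theta> k i)\<^sup>2" and ?W = "\<lambda>k. \<Sum>i=1..ls k. \<Sum>j=1..ls (k - 1). (wt ls idx \<theta> k i j)\<^sup>2"
  let ?f = "\<lambda>k. (2 * real k - 1) * ?B k + ?W k" and ?P = "\<Sum>i=1..ls L. \<xi> i * bs ls idx \<theta> L i"
  have "(\<Sum>k=1..L. ?f k) = (\<Sum>k=1..L. 2 * (real k * ?B k + ?W k) - layer_sqnorm ls idx \<theta> k)"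
    unfolding layer_sqnorm_def by (intro sum.cong refl) (simp add: algebra_simps)
  also have "\<dots> = 2 * (\<Sum>k=1..L. real k * ?B k + ?W k) - (norm \<theta>)\<^sup>2"
    by (simp only: sum_subtractf sum_distrib_left norm_sq_eq_sum_layer_sqnorm[OF bij])
  finally have "2 * Vfun ls L idx \<xi> \<theta> - (norm \<theta>)\<^sup>2 = (\<Sum>k=1..L. ?f k) - 4 * real L * ?P"
    unfolding Vfun_def by (simp add: algebra_simps)
  moreover have "?f L \<le> (\<Sum>k=1..L. ?f k)"
    using L by (intro member_le_sum add_nonneg_nonneg mult_nonneg_nonneg sum_nonneg) auto
  moreover have "1 * ?B L \<le> (2 * real L - 1) * ?B L" using L by (intro mult_right_mono) (auto intro: sum_nonneg)
  moreover have "0 \<le> ?W L" by (auto intro!: sum_nonneg)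
  moreover have "0 \<le> (\<Sum>i=1..ls L. (bs ls idx \<theta> L i - 2 * real L * \<xi> i)\<^sup>2)" by (auto intro: sum_nonneg)
  moreover have "(\<Sum>i=1..ls L. (bs ls idx \<theta> L i - 2 * real L * \<xi> i)\<^sup>2)
      = ?B L - 4 * real L * ?P + 4 * (real L)\<^sup>2 * (\<Sum>i=1..ls L. (\<xi> i)\<^sup>2)"
    by (simp add: power2_diff sum.distrib sum_subtractf sum_distrib_left algebra_simps power_mult_distrib)
  ultimately show ?thesis by linarith
qed

section \<open>The gradient bound and the key identity\<close>

lemma two_mult_le_weighted: "t > 0 \<Longrightarrow> 2 * p * q \<le> t * p\<^sup>2 + q\<^sup>2 / t" for p q t :: real
proof -
  assume t: "t > 0"
  have "0 \<le> (t * p - q)\<^sup>2 / t" using t by simp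
  also have "(t * p - q)\<^sup>2 / t = t * p\<^sup>2 - 2 * p * q + q\<^sup>2 / t"
    using t by (simp add: power2_eq_square field_simps)
  finally show ?thesis by simp
qed

lemma sq_le_4_mult_of_AM_bound:
  fixes Y A B :: real
  assumes "Y \<ge> 0" "A \<ge> 0" "B \<ge> 0" and le: "\<And>t. t > 0 \<Longrightarrow> Y \<le> t * A + B / t"
  shows "Y\<^sup>2 \<le> 4 * A * B"
proof (rule ccontr)
  assume c: "\<not> Y\<^sup>2 \<le> 4 * A * B"
  with assms have Y: "Y > 0" by (cases "Y = 0") auto
  show False
  proof (cases "A = 0")
    case True
    have "B < Y * (B / Y + 1)" using Y by (simp add: field_simps)
    then have "B / (B / Y + 1) < Y" using Y assms by (simp add: divide_less_eq mult.commute add_nonneg_pos)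
    moreover have "Y \<le> B / (B / Y + 1)" using le[of "B / Y + 1"] True Y assms by (simp add: add_nonneg_pos)
    ultimately show False by simp
  next
    case False
    with assms have A: "A > 0" by simp
    have "Y \<le> Y / (2 * A) * A + B / (Y / (2 * A))" using Y A by (intro le) simp
    also have "\<dots> = Y / 2 + 2 * A * B / Y" using A Y by (simp add: field_simps)
    also have "2 * A * B / Y < Y / 2" using c Y by (simp add: field_simps power2_eq_square)
    finally show False by simp
  qed
qed

context relu_net_loss
begin

definition "grad_const \<theta> = real L * (1 + (norm \<theta>)\<^sup>2) ^ (L - 1) * input_bound"

lemma mass_nonneg: "mass \<ge> 0"
  unfolding mass_def by simp

lemma grad_const_nonneg: "grad_const \<theta> \<ge> 0"
  unfolding grad_const_def input_bound_def by simp

lemma relu_loss_nonneg: "relu_loss \<theta> \<ge> 0"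
  unfolding relu_loss_def loss_def err_def by (intro integral_nonneg_AE AE_I2 sum_nonneg) auto

lemma relu_loss_eq_0_if_mass_0: "mass = 0 \<Longrightarrow> relu_loss \<theta> = 0"
proof -
  assume "mass = 0"
  then have "emeasure \<mu> (space \<mu>) = 0"
    using finite_measure.emeasure_eq_measure[OF finite_measure_\<mu>] unfolding mass_def by simp
  then have "AE x in \<mu>. err ls L idx idx0 act_inf f \<theta> x = 0" by (intro AE_I[where N="space \<mu>"]) auto
  then show ?thesis unfolding relu_loss_def loss_def by (rule integral_eq_zero_AE)
qed

lemma dnet_relu_sq_bound:
  assumes x: "x \<in> space \<mu>"
  shows "(\<Sum>i=1..ls L. (dnet ls idx idx0 act_inf relu_deriv \<theta> L x h i)\<^sup>2) \<le> (norm h)\<^sup>2 * grad_const \<theta>"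
  using dnet_output_sq_bound[OF idx_bij L_pos act_inf_abs_le relu_deriv_abs_le input_sq_le[OF x] order_refl]
  by (simp add: grad_const_def)

lemma integrable_err_deriv_relu: "integrable \<mu> (\<lambda>x. err_deriv ls L idx idx0 act_inf relu_deriv f \<theta> x h)"
proof -
  interpret finite_measure \<mu> by (rule finite_measure_\<mu>)
  show ?thesis
  proof (rule integrable_const_bound[where B="err_deriv_const (norm \<theta>) 1 * norm h"])
    show "AE x in \<mu>. norm (err_deriv ls L idx idx0 act_inf relu_deriv f \<theta> x h) \<le> err_deriv_const (norm \<theta>) 1 * norm h"
      using err_deriv_le[OF _ order_refl act_inf_abs_le relu_deriv_abs_le] by auto
  qed (rule err_deriv_\<mu>_measurable[OF act_inf_measurable relu_deriv_measurable])
qed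

lemma dloss_relu_le:
  assumes t: "t > 0"
  shows "dloss act_inf relu_deriv \<theta> h \<le> t * relu_loss \<theta> + mass * ((norm h)\<^sup>2 * grad_const \<theta>) / t"
proof -
  interpret finite_measure \<mu> by (rule finite_measure_\<mu>)
  have "dloss act_inf relu_deriv \<theta> h
      \<le> (\<integral>x. t * err ls L idx idx0 act_inf f \<theta> x + (norm h)\<^sup>2 * grad_const \<theta> / t \<partial>\<mu>)"
    unfolding dloss_def
  proof (rule integral_mono[OF integrable_err_deriv_relu])
    show "integrable \<mu> (\<lambda>x. t * err ls L idx idx0 act_inf f \<theta> x + (norm h)\<^sup>2 * grad_const \<theta> / t)"
      using integrable_err by simp
    fix x assume x: "x \<in> space \<mu>"
    let ?e = "\<lambda>i. net ls idx idx0 act_inf \<theta> L x i - f x i" and ?D = "\<lambda>i. dnet ls idx idx0 act_inf relu_deriv \<theta> L x h i"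
    have "err_deriv ls L idx idx0 act_inf relu_deriv f \<theta> x h \<le> (\<Sum>i=1..ls L. t * (?e i)\<^sup>2 + (?D i)\<^sup>2 / t)"
      unfolding err_deriv_def by (intro sum_mono two_mult_le_weighted t)
    also have "\<dots> = t * err ls L idx idx0 act_inf f \<theta> x + (\<Sum>i=1..ls L. (?D i)\<^sup>2) / t"
      unfolding err_def by (simp add: sum.distrib sum_distrib_left sum_divide_distrib)
    also have "\<dots> \<le> t * err ls L idx idx0 act_inf f \<theta> x + (norm h)\<^sup>2 * grad_const \<theta> / t"
      using dnet_relu_sq_bound[OF x] t by (simp add: divide_right_mono)
    finally show "err_deriv ls L idx idx0 act_inf relu_deriv f \<theta> x h
        \<le> t * err ls L idx idx0 act_inf f \<theta> x + (norm h)\<^sup>2 * grad_const \<theta> / t" .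
  qed
  also have "\<dots> = t * relu_loss \<theta> + mass * ((norm h)\<^sup>2 * grad_const \<theta>) / t"
    using integrable_err unfolding relu_loss_def loss_def mass_def by simp
  finally show ?thesis .
qed

text \<open>Testing \<open>dloss\<close> with \<open>h = G \<theta>\<close> itself and optimizing the weight \<open>t\<close> in \<open>dloss_relu_le\<close>.\<close>
lemma norm_G_sq_le: "(norm (G \<theta>))\<^sup>2 \<le> 4 * mass * relu_loss \<theta> * grad_const \<theta>"
proof -
  let ?n = "(norm (G \<theta>))\<^sup>2"
  have eq: "?n = dloss act_inf relu_deriv \<theta> (G \<theta>)" using inner_G[of \<theta> "G \<theta>"] by (simp add: power2_norm_eq_inner)
  have "?n \<le> t * relu_loss \<theta> + mass * (?n * grad_const \<theta>) / t" if "t > 0" for t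
    using dloss_relu_le[OF that, of \<theta> "G \<theta>"] eq by linarith
  then have "?n\<^sup>2 \<le> 4 * relu_loss \<theta> * (mass * (?n * grad_const \<theta>))"
    by (intro sq_le_4_mult_of_AM_bound) (auto intro!: mult_nonneg_nonneg relu_loss_nonneg mass_nonneg grad_const_nonneg)
  then have prod: "?n * ?n \<le> (4 * mass * relu_loss \<theta> * grad_const \<theta>) * ?n"
    by (simp add: power2_eq_square mult_ac)
  show ?thesis
  proof (cases "?n = 0")
    case True
    then show ?thesis using relu_loss_nonneg[of \<theta>] mass_nonneg grad_const_nonneg[of \<theta>] by simp
  next
    case False
    then show ?thesis by (intro mult_right_le_imp_le[OF prod]) simp
  qed
qed

text \<open>\<open>grad_V\<close> scales the biases of layer \<open>k\<close> by \<open>2 k\<close> and all weights by \<open>2\<close>, so Euler's identity applies;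
  the shift \<open>- 2 L f 0\<close> of the output biases turns \<open>2 L N\<close> into \<open>2 L (N - f)\<close> because the target is
  constant on the data.\<close>
lemma dloss_relu_grad_V: "dloss act_inf relu_deriv \<theta> (grad_V ls L idx (f 0) \<theta>) = 4 * real L * relu_loss \<theta>"
proof -
  let ?v = "grad_V ls L idx (f 0) \<theta>"
  have hb: "bs ls idx ?v k i = 2 * real k * bs ls idx \<theta> k i + (if k = L then - 2 * real L * f 0 i else 0)"
    if "k \<in> {1..L}" "i \<in> {1..ls k}" for k i
    using bs_grad_V[OF idx_bij that] by simp
  have D: "dnet ls idx idx0 act_inf relu_deriv \<theta> L x ?v i = 2 * real L * net ls idx idx0 act_inf \<theta> L x i - 2 * real L * f 0 i"
    if "i \<in> {1..ls L}" for x i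
  proof -
    have "dnet ls idx idx0 act_inf relu_deriv \<theta> L x ?v i
        = 2 * real L * net ls idx idx0 act_inf \<theta> L x i + (if L = L then - 2 * real L * f 0 i else 0)"
      by (rule dnet_relu_euler[OF hb wt_grad_V[OF idx_bij]]) (use that L_pos in auto)
    then show ?thesis by simp
  qed
  have "dloss act_inf relu_deriv \<theta> ?v = (\<integral>x. 4 * real L * err ls L idx idx0 act_inf f \<theta> x \<partial>\<mu>)"
    unfolding dloss_def err_deriv_def err_def sum_distrib_left
    by (intro Bochner_Integration.integral_cong refl sum.cong)
       (simp add: D target_eq power2_eq_square algebra_simps)
  then show ?thesis unfolding relu_loss_def loss_def by simp
qed

lemma Vfun_G_step:
  "Vfun ls L idx (f 0) (\<theta> - \<gamma> *\<^sub>R G \<theta>)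
     \<le> Vfun ls L idx (f 0) \<theta> - \<gamma> * (4 * real L * relu_loss \<theta>) + \<gamma>\<^sup>2 * (real L * (norm (G \<theta>))\<^sup>2)"
  using weighted_inner_self_le[OF idx_bij, of "G \<theta>"]
  unfolding Vfun_step[OF idx_bij L_pos] inner_G dloss_relu_grad_V
  by (simp add: mult_left_mono)

end

section \<open>Lipschitz continuity of the ReLU loss in the parameters\<close>

fun lip_const :: "real \<Rightarrow> real \<Rightarrow> nat \<Rightarrow> real" where
  "lip_const \<rho> X 0 = 0"
| "lip_const \<rho> X (Suc 0) = X"
| "lip_const \<rho> X (Suc (Suc k)) = 2 * (1 + \<rho>\<^sup>2) ^ Suc k * X + 2 * \<rho>\<^sup>2 * lip_const \<rho> X (Suc k)"

lemma act_inf_sq_dist_le: "(act_inf k y - act_inf k z)\<^sup>2 \<le> (y - z)\<^sup>2"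
  unfolding act_inf_def by (simp add: abs_le_square_iff[symmetric] max_def)

lemma relu_layer_diff_sq_le:
  fixes y z :: "nat \<Rightarrow> real" and w :: "nat \<Rightarrow> nat \<Rightarrow> real"
  shows "(\<Sum>i\<in>I. (\<Sum>j\<in>J. w i j * (act_inf k (y j) - act_inf k (z j)))\<^sup>2)
           \<le> (\<Sum>i\<in>I. \<Sum>j\<in>J. (w i j)\<^sup>2) * (\<Sum>j\<in>J. (y j - z j)\<^sup>2)"
  by (rule order_trans[OF linear_layer_sq_le mult_left_mono]) (auto intro!: sum_mono sum_nonneg act_inf_sq_dist_le)

lemma net_relu_diff_step_sq_bound:
  fixes \<theta> \<theta>' :: "real^'n" and x :: "real^'m"
  assumes bij: "bij_betw idx {1..dd ls L} (UNIV :: 'n set)"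
    and \<theta>: "norm \<theta> \<le> \<rho>" and \<theta>': "norm \<theta>' \<le> \<rho>"
    and X: "1 + (\<Sum>j=1..ls 0. (x $ idx0 j)\<^sup>2) \<le> Xb" and k: "Suc (Suc k) \<in> {1..L}"
    and prev: "(\<Sum>j=1..ls (Suc k). (net ls idx idx0 act_inf \<theta>' (Suc k) x j - net ls idx idx0 act_inf \<theta> (Suc k) x j)\<^sup>2)
                 \<le> \<Lambda> * (norm (\<theta>' - \<theta>))\<^sup>2"
  shows "(\<Sum>i=1..ls (Suc (Suc k)).
            (net ls idx idx0 act_inf \<theta>' (Suc (Suc k)) x i - net ls idx idx0 act_inf \<theta> (Suc (Suc k)) x i)\<^sup>2)
           \<le> (2 * (1 + \<rho>\<^sup>2) ^ Suc k * Xb + 2 * \<rho>\<^sup>2 * \<Lambda>) * (norm (\<theta>' - \<theta>))\<^sup>2"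
proof -
  let ?d = "\<theta>' - \<theta>" and ?K = "Suc k"
  let ?N' = "\<lambda>j. net ls idx idx0 act_inf \<theta>' ?K x j" and ?N = "\<lambda>j. net ls idx idx0 act_inf \<theta> ?K x j"
  define u where "u i = bs ls idx ?d (Suc ?K) i + (\<Sum>j=1..ls ?K. wt ls idx ?d (Suc ?K) i j * act_inf ?K (?N' j))" for i
  define v where "v i = (\<Sum>j=1..ls ?K. wt ls idx \<theta> (Suc ?K) i j * (act_inf ?K (?N' j) - act_inf ?K (?N j)))" for i
  have K: "?K \<in> {1..L}" using k by auto
  have "(\<Sum>i=1..ls (Suc ?K). (u i)\<^sup>2)
      \<le> layer_sqnorm ls idx ?d (Suc ?K) * ((1 + \<rho>\<^sup>2) ^ ?K * (1 + (\<Sum>j=1..ls 0. (x $ idx0 j)\<^sup>2)))"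
    unfolding u_def by (rule layer_perturbation_sq_bound[OF act_inf_abs_le layer_sqnorm_le_radius[OF bij _ \<theta>'] K])
  also have "\<dots> \<le> (norm ?d)\<^sup>2 * ((1 + \<rho>\<^sup>2) ^ ?K * Xb)"
    using layer_sqnorm_le_norm_sq[OF bij k] X
    by (intro mult_mono mult_left_mono) (auto intro!: add_nonneg_nonneg sum_nonneg mult_nonneg_nonneg)
  finally have U: "(\<Sum>i=1..ls (Suc ?K). (u i)\<^sup>2) \<le> (norm ?d)\<^sup>2 * ((1 + \<rho>\<^sup>2) ^ ?K * Xb)" .
  have "(\<Sum>i=1..ls (Suc ?K). (v i)\<^sup>2)
      \<le> (\<Sum>i=1..ls (Suc ?K). \<Sum>j=1..ls ?K. (wt ls idx \<theta> (Suc ?K) i j)\<^sup>2) * (\<Sum>j=1..ls ?K. (?N' j - ?N j)\<^sup>2)"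
    unfolding v_def by (rule relu_layer_diff_sq_le)
  also have "\<dots> \<le> \<rho>\<^sup>2 * (\<Lambda> * (norm ?d)\<^sup>2)"
    using weights_sq_le_layer_sqnorm[where k="Suc ?K" and \<theta>=\<theta> and ls=ls and idx=idx]
      layer_sqnorm_le_radius[OF bij k \<theta>] prev
    by (intro mult_mono) (auto intro!: sum_nonneg)
  finally have V: "(\<Sum>i=1..ls (Suc ?K). (v i)\<^sup>2) \<le> (norm ?d)\<^sup>2 * (\<rho>\<^sup>2 * \<Lambda>)" by (simp add: mult_ac)
  have "net ls idx idx0 act_inf \<theta>' (Suc ?K) x i - net ls idx idx0 act_inf \<theta> (Suc ?K) x i = u i + v i" for i
    unfolding u_def v_def
    by (simp add: bs_diff wt_diff sum_subtractf[symmetric] sum.distrib[symmetric] algebra_simps)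
  then have "(\<Sum>i=1..ls (Suc ?K). (net ls idx idx0 act_inf \<theta>' (Suc ?K) x i - net ls idx idx0 act_inf \<theta> (Suc ?K) x i)\<^sup>2)
      \<le> 2 * (\<Sum>i=1..ls (Suc ?K). (u i)\<^sup>2) + 2 * (\<Sum>i=1..ls (Suc ?K). (v i)\<^sup>2)"
    by (simp add: sum_sq_add_le_2)
  also have "\<dots> \<le> (2 * (1 + \<rho>\<^sup>2) ^ ?K * Xb + 2 * \<rho>\<^sup>2 * \<Lambda>) * (norm ?d)\<^sup>2"
    using U V by (simp add: algebra_simps)
  finally show ?thesis .
qed

lemma net_relu_lipschitz:
  fixes \<theta> \<theta>' :: "real^'n" and x :: "real^'m"
  assumes bij: "bij_betw idx {1..dd ls L} (UNIV :: 'n set)"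
    and \<theta>: "norm \<theta> \<le> \<rho>" and \<theta>': "norm \<theta>' \<le> \<rho>"
    and X: "1 + (\<Sum>j=1..ls 0. (x $ idx0 j)\<^sup>2) \<le> Xb"
  shows "k \<in> {1..L} \<Longrightarrow> (\<Sum>i=1..ls k. (net ls idx idx0 act_inf \<theta>' k x i - net ls idx idx0 act_inf \<theta> k x i)\<^sup>2)
      \<le> lip_const \<rho> Xb k * (norm (\<theta>' - \<theta>))\<^sup>2"
proof (induction k rule: induct_nat_012)
  case 1
  let ?d = "\<theta>' - \<theta>"
  have "(\<Sum>i=1..ls 1. (net ls idx idx0 act_inf \<theta>' 1 x i - net ls idx idx0 act_inf \<theta> 1 x i)\<^sup>2)
      = (\<Sum>i=1..ls 1. (bs ls idx ?d 1 i + (\<Sum>j=1..ls 0. wt ls idx ?d 1 i j * x $ idx0 j))\<^sup>2)"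
    by (simp add: bs_diff wt_diff sum_subtractf left_diff_distrib algebra_simps)
  also have "\<dots> \<le> layer_sqnorm ls idx ?d 1 * (1 + (\<Sum>j=1..ls 0. (x $ idx0 j)\<^sup>2))"
    using affine_layer_sq_le[of "bs ls idx ?d 1" "wt ls idx ?d 1" "\<lambda>j. x $ idx0 j" "{1..ls 0}" "{1..ls 1}"]
    by (simp add: layer_sqnorm_def)
  also have "\<dots> \<le> (norm ?d)\<^sup>2 * Xb"
    using layer_sqnorm_le_norm_sq[OF bij 1] X layer_sqnorm_nonneg[of ls idx ?d 1]
    by (intro mult_mono) (auto intro!: add_nonneg_nonneg sum_nonneg)
  finally show ?case by (simp add: mult.commute)
next
  case (ge2 k)
  then show ?case using net_relu_diff_step_sq_bound[OF bij \<theta> \<theta>' X] by simp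
qed simp

lemma sq_add_le_weighted: "t > 0 \<Longrightarrow> (p + q)\<^sup>2 \<le> (1 + t) * p\<^sup>2 + (1 + 1 / t) * q\<^sup>2" for p q t :: real
  using two_mult_le_weighted[of t p q] by (simp add: power2_sum algebra_simps)

context relu_net_loss
begin

lemma relu_loss_change:
  assumes \<theta>: "norm \<theta> \<le> \<rho>" and \<theta>': "norm \<theta>' \<le> \<rho>" and t: "t > 0"
  shows "relu_loss \<theta>' \<le> (1 + t) * relu_loss \<theta> + (1 + 1 / t) * (mass * (lip_const \<rho> input_bound L * (norm (\<theta>' - \<theta>))\<^sup>2))"
proof -
  interpret finite_measure \<mu> by (rule finite_measure_\<mu>)
  let ?c = "lip_const \<rho> input_bound L * (norm (\<theta>' - \<theta>))\<^sup>2"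
  have "relu_loss \<theta>' \<le> (\<integral>x. (1 + t) * err ls L idx idx0 act_inf f \<theta> x + (1 + 1 / t) * ?c \<partial>\<mu>)"
    unfolding relu_loss_def loss_def
  proof (rule integral_mono)
    fix x assume x: "x \<in> space \<mu>"
    let ?N' = "\<lambda>i. net ls idx idx0 act_inf \<theta>' L x i" and ?N = "\<lambda>i. net ls idx idx0 act_inf \<theta> L x i"
    have "err ls L idx idx0 act_inf f \<theta>' x = (\<Sum>i=1..ls L. ((?N i - f x i) + (?N' i - ?N i))\<^sup>2)"
      unfolding err_def by simp
    also have "\<dots> \<le> (\<Sum>i=1..ls L. (1 + t) * (?N i - f x i)\<^sup>2 + (1 + 1 / t) * (?N' i - ?N i)\<^sup>2)"
      by (intro sum_mono sq_add_le_weighted t)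
    also have "\<dots> = (1 + t) * err ls L idx idx0 act_inf f \<theta> x + (1 + 1 / t) * (\<Sum>i=1..ls L. (?N' i - ?N i)\<^sup>2)"
      unfolding err_def by (simp add: sum.distrib sum_distrib_left)
    also have "\<dots> \<le> (1 + t) * err ls L idx idx0 act_inf f \<theta> x + (1 + 1 / t) * ?c"
      using net_relu_lipschitz[OF idx_bij \<theta> \<theta>' input_sq_le[OF x], of L] L_pos t
      by (intro add_left_mono mult_left_mono) auto
    finally show "err ls L idx idx0 act_inf f \<theta>' x \<le> (1 + t) * err ls L idx idx0 act_inf f \<theta> x + (1 + 1 / t) * ?c" .
  qed (use integrable_err in simp_all)
  also have "\<dots> = (1 + t) * relu_loss \<theta> + (1 + 1 / t) * (mass * ?c)"
    using integrable_err unfolding relu_loss_def loss_def mass_def by (simp add: mult_ac)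
  finally show ?thesis .
qed

end

section \<open>Gradient descent\<close>

locale gd_trajectory = relu_net_loss R AA BB C L ls a b idx idx0 \<mu> f G
  for R AA BB C L ls a b and idx :: "nat \<Rightarrow> 'n::finite" and idx0 :: "nat \<Rightarrow> 'm::finite" and \<mu> f G +
  fixes \<gamma> :: "nat \<Rightarrow> real" and \<Theta> :: "nat \<Rightarrow> real^'n"
  assumes \<gamma>_nonneg: "\<And>n. \<gamma> n \<ge> 0"
    and \<Theta>_step: "\<And>n. \<Theta> (Suc n) = \<Theta> n - \<gamma> n *\<^sub>R G (\<Theta> n)"
    and \<gamma>_divergent: "filterlim (\<lambda>N. \<Sum>n<N. \<gamma> n) at_top sequentially"
    and \<gamma>_small: "bdd_above (range (\<lambda>n. \<gamma> n * measure \<mu> (space \<mu>))) \<and>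
       (SUP n. \<gamma> n * measure \<mu> (space \<mu>)) <
         1 / (real L * (max \<bar>a\<bar> (max \<bar>b\<bar> 1))\<^sup>2 * (\<Prod>p=0..L. real (ls p) + 1)
              * (2 * Vfun ls L idx (f 0) (\<Theta> 0) + 4 * (real L)\<^sup>2 * (\<Sum>i=1..ls L. (f 0 i)\<^sup>2) + 1) ^ (L - 1))"
begin

definition "radius_sq = 2 * Vfun ls L idx (f 0) (\<Theta> 0) + 4 * (real L)\<^sup>2 * target_sqnorm"
definition "grad_const_max =
  real L * (max \<bar>a\<bar> (max \<bar>b\<bar> 1))\<^sup>2 * (\<Prod>p=0..L. real (ls p) + 1) * (radius_sq + 1) ^ (L - 1)"
definition "step_max = (SUP n. \<gamma> n * mass)"
definition "descent_rate = 4 * real L * (1 - step_max * grad_const_max)"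

lemma radius_sq_nonneg: "radius_sq \<ge> 0"
  using norm_sq_le_Vfun[OF idx_bij L_pos, of "\<Theta> 0" "f 0"] unfolding radius_sq_def target_sqnorm_def
  by (meson order_trans zero_le_power2)

lemma input_bound_le: "input_bound \<le> (max \<bar>a\<bar> (max \<bar>b\<bar> 1))\<^sup>2 * (\<Prod>p=0..L. real (ls p) + 1)"
proof -
  let ?a = "max \<bar>a\<bar> (max \<bar>b\<bar> 1)" and ?P = "\<Prod>p=0..L. real (ls p) + 1"
  have "real (ls 0) + 1 \<le> (real (ls 0) + 1) * (\<Prod>p=Suc 0..L. real (ls p) + 1)"
    by (simp add: prod_ge_1)
  then have P: "real (ls 0) + 1 \<le> ?P" by (simp add: prod.atLeast_Suc_atMost)
  have "input_bound \<le> ?a\<^sup>2 + real (ls 0) * ?a\<^sup>2"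
    unfolding input_bound_def by (intro add_mono mult_left_mono power_mono) (auto simp: one_le_power)
  also have "\<dots> = ?a\<^sup>2 * (real (ls 0) + 1)" by (simp add: algebra_simps)
  also have "\<dots> \<le> ?a\<^sup>2 * ?P" using P by (intro mult_left_mono) auto
  finally show ?thesis .
qed

lemma grad_const_le:
  assumes "(norm \<theta>)\<^sup>2 \<le> radius_sq" shows "grad_const \<theta> \<le> grad_const_max"
proof -
  have "(1 + (norm \<theta>)\<^sup>2) ^ (L - 1) \<le> (radius_sq + 1) ^ (L - 1)" using assms by (intro power_mono) auto
  then have "real L * (1 + (norm \<theta>)\<^sup>2) ^ (L - 1) * input_bound
      \<le> real L * (radius_sq + 1) ^ (L - 1) * ((max \<bar>a\<bar> (max \<bar>b\<bar> 1))\<^sup>2 * (\<Prod>p=0..L. real (ls p) + 1))"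
    using input_bound_le radius_sq_nonneg by (intro mult_mono) (auto simp: input_bound_def)
  then show ?thesis unfolding grad_const_def grad_const_max_def by (simp add: mult_ac)
qed

lemma grad_const_max_pos: "grad_const_max > 0"
  unfolding grad_const_max_def using L_pos radius_sq_nonneg by (simp add: prod_pos)

lemma step_le_step_max: "\<gamma> n * mass \<le> step_max"
  unfolding step_max_def mass_def by (rule cSUP_upper) (use \<gamma>_small in auto)

lemma step_max_nonneg: "step_max \<ge> 0"
  using step_le_step_max[of 0] \<gamma>_nonneg[of 0] mass_nonneg by (meson mult_nonneg_nonneg order_trans)

lemma descent_rate_pos: "descent_rate > 0"
proof -
  have "step_max < 1 / grad_const_max"
    using \<gamma>_small unfolding step_max_def grad_const_max_def radius_sq_def target_sqnorm_def mass_def by simp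
  then show ?thesis
    unfolding descent_rate_def using grad_const_max_pos L_pos by (simp add: pos_less_divide_eq mult.commute)
qed

text \<open>The descent step: the \<open>\<gamma>\<^sup>2\<close> term of \<open>Vfun_G_step\<close> is absorbed using \<open>norm_G_sq_le\<close> and the
  step size condition.\<close>
lemma Vfun_descent:
  assumes "(norm (\<Theta> n))\<^sup>2 \<le> radius_sq"
  shows "Vfun ls L idx (f 0) (\<Theta> (Suc n)) \<le> Vfun ls L idx (f 0) (\<Theta> n) - descent_rate * \<gamma> n * relu_loss (\<Theta> n)"
proof -
  let ?\<theta> = "\<Theta> n" and ?\<gamma> = "\<gamma> n"
  have pos: "0 \<le> 4 * real L * ?\<gamma> * relu_loss ?\<theta>" using \<gamma>_nonneg relu_loss_nonneg by simp
  have "?\<gamma>\<^sup>2 * (real L * (norm (G ?\<theta>))\<^sup>2) \<le> ?\<gamma>\<^sup>2 * (real L * (4 * mass * relu_loss ?\<theta> * grad_const ?\<theta>))"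
    using norm_G_sq_le by (intro mult_left_mono) auto
  also have "\<dots> = (4 * real L * ?\<gamma> * relu_loss ?\<theta>) * (?\<gamma> * mass * grad_const ?\<theta>)"
    by (simp add: power2_eq_square mult_ac)
  also have "\<dots> \<le> (4 * real L * ?\<gamma> * relu_loss ?\<theta>) * (step_max * grad_const_max)"
    using step_le_step_max[of n] grad_const_le[OF assms] grad_const_nonneg step_max_nonneg pos
    by (intro mult_left_mono mult_mono) auto
  moreover have "Vfun ls L idx (f 0) (\<Theta> (Suc n))
      \<le> Vfun ls L idx (f 0) ?\<theta> - ?\<gamma> * (4 * real L * relu_loss ?\<theta>) + ?\<gamma>\<^sup>2 * (real L * (norm (G ?\<theta>))\<^sup>2)"
    using Vfun_G_step[of ?\<theta> ?\<gamma>] by (simp only: \<Theta>_step)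
  moreover have "descent_rate * ?\<gamma> * relu_loss ?\<theta>
      = ?\<gamma> * (4 * real L * relu_loss ?\<theta>) - (4 * real L * ?\<gamma> * relu_loss ?\<theta>) * (step_max * grad_const_max)"
    unfolding descent_rate_def by (simp add: algebra_simps)
  ultimately show ?thesis by linarith
qed

lemma Vfun_lower_bound: "Vfun ls L idx (f 0) \<theta> \<ge> - 2 * (real L)\<^sup>2 * target_sqnorm"
  using norm_sq_le_Vfun[OF idx_bij L_pos, of \<theta> "f 0"] zero_le_power2[of "norm \<theta>"]
  unfolding target_sqnorm_def by linarith

lemma trajectory_bounded:
  "Vfun ls L idx (f 0) (\<Theta> n) \<le> Vfun ls L idx (f 0) (\<Theta> 0) \<and> (norm (\<Theta> n))\<^sup>2 \<le> radius_sq"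
proof (induction n)
  case 0
  show ?case using norm_sq_le_Vfun[OF idx_bij L_pos] by (simp add: radius_sq_def target_sqnorm_def)
next
  case (Suc n)
  have "0 \<le> descent_rate * \<gamma> n * relu_loss (\<Theta> n)"
    using descent_rate_pos \<gamma>_nonneg[of n] relu_loss_nonneg[of "\<Theta> n"] by simp
  then have "Vfun ls L idx (f 0) (\<Theta> (Suc n)) \<le> Vfun ls L idx (f 0) (\<Theta> n)"
    using Vfun_descent[OF Suc[THEN conjunct2]] by linarith
  with Suc have "Vfun ls L idx (f 0) (\<Theta> (Suc n)) \<le> Vfun ls L idx (f 0) (\<Theta> 0)" by simp
  moreover have "(norm (\<Theta> (Suc n)))\<^sup>2 \<le> 2 * Vfun ls L idx (f 0) (\<Theta> (Suc n)) + 4 * (real L)\<^sup>2 * target_sqnorm"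
    unfolding target_sqnorm_def by (rule norm_sq_le_Vfun[OF idx_bij L_pos])
  ultimately show ?case unfolding radius_sq_def by simp
qed

lemma norm_trajectory_le: "norm (\<Theta> n) \<le> sqrt radius_sq"
  using trajectory_bounded[of n] by (simp add: real_le_rsqrt)

lemma summable_step_loss: "summable (\<lambda>n. \<gamma> n * relu_loss (\<Theta> n))"
proof (rule summableI_nonneg_bounded)
  show "0 \<le> \<gamma> n * relu_loss (\<Theta> n)" for n using \<gamma>_nonneg relu_loss_nonneg by simp
  fix N
  have "Vfun ls L idx (f 0) (\<Theta> N) + descent_rate * (\<Sum>n<N. \<gamma> n * relu_loss (\<Theta> n)) \<le> Vfun ls L idx (f 0) (\<Theta> 0)"
  proof (induction N)
    case (Suc N)
    then show ?case using Vfun_descent[of N] trajectory_bounded[of N] by (simp add: algebra_simps)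
  qed simp
  then show "(\<Sum>n<N. \<gamma> n * relu_loss (\<Theta> n)) \<le> (Vfun ls L idx (f 0) (\<Theta> 0) + 2 * (real L)\<^sup>2 * target_sqnorm) / descent_rate"
    using Vfun_lower_bound[of "\<Theta> N"] descent_rate_pos by (simp add: field_simps)
qed

lemma step_norm_sq_le:
  "(norm (\<Theta> (Suc n) - \<Theta> n))\<^sup>2 \<le> \<gamma> n * (\<gamma> n * mass) * (4 * relu_loss (\<Theta> n) * grad_const_max)"
proof -
  have "(norm (\<Theta> (Suc n) - \<Theta> n))\<^sup>2 = (\<gamma> n)\<^sup>2 * (norm (G (\<Theta> n)))\<^sup>2"
    using \<Theta>_step \<gamma>_nonneg by (simp add: power_mult_distrib)
  also have "\<dots> \<le> (\<gamma> n)\<^sup>2 * (4 * mass * relu_loss (\<Theta> n) * grad_const (\<Theta> n))"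
    using norm_G_sq_le by (intro mult_left_mono) auto
  also have "\<dots> \<le> (\<gamma> n)\<^sup>2 * (4 * mass * relu_loss (\<Theta> n) * grad_const_max)"
    using grad_const_le[OF trajectory_bounded[THEN conjunct2]] mass_nonneg relu_loss_nonneg[of "\<Theta> n"]
    by (intro mult_left_mono) auto
  finally show ?thesis by (simp add: power2_eq_square mult_ac)
qed

definition "loss_step_const = 4 * \<bar>lip_const (sqrt radius_sq) input_bound L\<bar> * grad_const_max * mass * (step_max + mass)"

lemma loss_step_const_nonneg: "loss_step_const \<ge> 0"
  unfolding loss_step_const_def using grad_const_max_pos mass_nonneg step_max_nonneg by simp

lemma lipschitz_term_le:
  assumes "\<gamma> n > 0"
  shows "(1 + 1 / \<gamma> n) * (mass * (lip_const (sqrt radius_sq) input_bound L * (norm (\<Theta> (Suc n) - \<Theta> n))\<^sup>2))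
           \<le> \<gamma> n * loss_step_const * relu_loss (\<Theta> n)"
proof -
  let ?g = "\<gamma> n" and ?l = "relu_loss (\<Theta> n)" and ?\<Lambda> = "\<bar>lip_const (sqrt radius_sq) input_bound L\<bar>"
  have "(1 + 1 / ?g) * (mass * (lip_const (sqrt radius_sq) input_bound L * (norm (\<Theta> (Suc n) - \<Theta> n))\<^sup>2))
      \<le> (1 + 1 / ?g) * (mass * (?\<Lambda> * (?g * (?g * mass) * (4 * ?l * grad_const_max))))"
    using step_norm_sq_le[of n] assms mass_nonneg
    by (intro mult_left_mono mult_mono) (auto intro: add_nonneg_nonneg)
  also have "\<dots> = 4 * ?\<Lambda> * grad_const_max * ?l * mass * ?g * (?g * mass + mass)"
    using assms by (simp add: field_simps)
  also have "\<dots> \<le> 4 * ?\<Lambda> * grad_const_max * ?l * mass * ?g * (step_max + mass)"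
    using step_le_step_max[of n] relu_loss_nonneg[of "\<Theta> n"] mass_nonneg assms grad_const_max_pos
    by (intro mult_left_mono) (auto intro!: mult_nonneg_nonneg)
  finally show ?thesis unfolding loss_step_const_def by (simp add: mult_ac)
qed

lemma relu_loss_step_le:
  assumes "\<gamma> n > 0"
  shows "relu_loss (\<Theta> (Suc n)) \<le> (1 + \<gamma> n) * relu_loss (\<Theta> n) + \<gamma> n * loss_step_const * relu_loss (\<Theta> n)"
    and "relu_loss (\<Theta> n) \<le> (1 + \<gamma> n) * relu_loss (\<Theta> (Suc n)) + \<gamma> n * loss_step_const * relu_loss (\<Theta> n)"
  using relu_loss_change[OF norm_trajectory_le norm_trajectory_le assms, of n "Suc n"]
    relu_loss_change[OF norm_trajectory_le norm_trajectory_le assms, of "Suc n" n]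
    lipschitz_term_le[OF assms]
  by (simp_all add: norm_minus_commute)

lemma abs_relu_loss_step_le:
  assumes "mass > 0"
  shows "\<exists>c. \<forall>n. \<bar>relu_loss (\<Theta> (Suc n)) - relu_loss (\<Theta> n)\<bar> \<le> c * (\<gamma> n * relu_loss (\<Theta> n))"
proof (intro exI allI)
  fix n
  let ?g = "\<gamma> n" and ?l = "relu_loss (\<Theta> n)" and ?l' = "relu_loss (\<Theta> (Suc n))" and ?c = loss_step_const
  define c where "c = 1 + step_max / mass * (1 + ?c) + ?c"
  show "\<bar>?l' - ?l\<bar> \<le> c * (?g * ?l)"
  proof (cases "?g = 0")
    case True
    then show ?thesis using \<Theta>_step by simp
  next
    case False
    then have g: "?g > 0" using \<gamma>_nonneg by (simp add: order_le_neq_trans)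
    have gmax: "?g \<le> step_max / mass" using step_le_step_max[of n] assms by (simp add: field_simps)
    have nonneg: "?l \<ge> 0" "?l' \<ge> 0" "?c \<ge> 0" using relu_loss_nonneg loss_step_const_nonneg by auto
    note up = relu_loss_step_le(1)[OF g] and down = relu_loss_step_le(2)[OF g]
    have "?l' - ?l \<le> ?g * ?l * (1 + ?c)" using up by (simp add: algebra_simps)
    also have "\<dots> \<le> c * (?g * ?l)"
      unfolding c_def using g nonneg gmax step_max_nonneg assms by (simp add: algebra_simps)
    finally have A: "?l' - ?l \<le> c * (?g * ?l)" .
    have "?l - ?l' \<le> ?g * ?l' + ?g * ?c * ?l" using down by (simp add: algebra_simps)
    also have "?g * ?l' \<le> ?g * (?l + ?g * ?l * (1 + ?c))"
      using up g by (intro mult_left_mono) (auto simp: algebra_simps)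
    also have "?g * (?l + ?g * ?l * (1 + ?c)) + ?g * ?c * ?l = (?g * ?l) * (1 + ?g * (1 + ?c) + ?c)"
      by (simp add: algebra_simps)
    also have "\<dots> \<le> (?g * ?l) * c"
      unfolding c_def using gmax g nonneg by (intro mult_left_mono add_mono mult_right_mono) auto
    finally have B: "?l - ?l' \<le> c * (?g * ?l)" by (simp add: mult.commute)
    show ?thesis using A B by linarith
  qed
qed

text \<open>The losses converge since their increments are dominated by the summable \<open>\<gamma> n * relu_loss (\<Theta> n)\<close>,
  and a positive limit would make \<open>\<gamma>\<close> summable.\<close>
lemma relu_loss_tendsto_0: "(\<lambda>n. relu_loss (\<Theta> n)) \<longlonglongrightarrow> 0"
proof (cases "mass > 0")
  case False
  then show ?thesis using mass_nonneg relu_loss_eq_0_if_mass_0 by simp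
next
  case True
  let ?l = "\<lambda>n. relu_loss (\<Theta> n)"
  obtain c where c: "\<And>n. \<bar>?l (Suc n) - ?l n\<bar> \<le> c * (\<gamma> n * ?l n)"
    using abs_relu_loss_step_le[OF True] by blast
  have "summable (\<lambda>n. ?l (Suc n) - ?l n)"
    by (rule summable_comparison_test[OF _ summable_mult[OF summable_step_loss]]) (use c in auto)
  then have "(\<lambda>N. ?l 0 + (\<Sum>n<N. ?l (Suc n) - ?l n)) \<longlonglongrightarrow> ?l 0 + (\<Sum>n. ?l (Suc n) - ?l n)"
    by (intro tendsto_add tendsto_const summable_LIMSEQ)
  moreover have "?l 0 + (\<Sum>n<N. ?l (Suc n) - ?l n) = ?l N" for N
    using sum_lessThan_telescope[of ?l N] by simp
  ultimately obtain l where lim: "?l \<longlonglongrightarrow> l" by auto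
  have "l \<ge> 0" by (rule LIMSEQ_le_const[OF lim]) (use relu_loss_nonneg in blast)
  moreover have "l \<le> 0"
  proof (rule ccontr)
    assume "\<not> l \<le> 0"
    then have "\<forall>\<^sub>F n in sequentially. l / 2 < ?l n" by (intro order_tendstoD(1)[OF lim]) simp
    then have "\<forall>\<^sub>F n in sequentially. norm (\<gamma> n) \<le> (2 / l) * (\<gamma> n * ?l n)"
    proof (rule eventually_mono)
      fix n assume "l / 2 < ?l n"
      then have "\<gamma> n * (l / 2) \<le> \<gamma> n * ?l n" using \<gamma>_nonneg by (intro mult_left_mono) auto
      then show "norm (\<gamma> n) \<le> (2 / l) * (\<gamma> n * ?l n)" using \<open>\<not> l \<le> 0\<close> \<gamma>_nonneg by (simp add: field_simps)
    qed
    then have "summable \<gamma>"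
      by (rule summable_comparison_test_ev) (intro summable_mult summable_step_loss)
    moreover obtain N where "suminf \<gamma> + 1 \<le> (\<Sum>n<N. \<gamma> n)"
      using \<gamma>_divergent unfolding filterlim_at_top eventually_sequentially by blast
    ultimately show False using sum_le_suminf[of \<gamma> "{..<N}"] \<gamma>_nonneg by simp
  qed
  ultimately show ?thesis using lim by simp
qed

end

theorem theorem4p7:
  fixes L :: nat and ls :: "nat \<Rightarrow> nat" and a b AA BB :: real
    and idx :: "nat \<Rightarrow> 'n::finite" and idx0 :: "nat \<Rightarrow> 'm::finite"
    and R :: "real \<Rightarrow> real \<Rightarrow> real"
    and \<mu> :: "(real^'m) measure" and f :: "real^'m \<Rightarrow> nat \<Rightarrow> real"
    and G :: "real^'n \<Rightarrow> real^'n"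
    and \<gamma> :: "nat \<Rightarrow> real" and \<Theta> :: "nat \<Rightarrow> real^'n"
  assumes L_pos: "L \<ge> 1"
    and ls_pos: "\<forall>k. ls k \<ge> 1"
    and ab: "a < b"
    and A_pos: "0 < AA" and AB: "AA < BB"
    and idx_bij: "bij_betw idx {1..dd ls L} UNIV"
    and idx0_bij: "bij_betw idx0 {1..ls 0} UNIV"
    and R_C1: "\<forall>r\<ge>1. (\<forall>x. R r differentiable (at x)) \<and> continuous_on UNIV (deriv (R r))"
    and R_zero: "\<forall>r\<ge>1. \<forall>x. x \<le> AA / r \<longrightarrow> R r x = 0"
    and R_bnd: "\<forall>r\<ge>1. \<forall>y. 0 \<le> R r y \<and> R r y \<le> max y 0"
    and R_id: "\<forall>r\<ge>1. \<forall>z. z \<ge> BB / r \<longrightarrow> R r z = z"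
    and R_deriv_bdd: "\<exists>C. \<forall>r\<ge>1. \<forall>x. \<bar>deriv (R r) x\<bar> \<le> C"
    and \<mu>_sets: "sets \<mu> = sets (restrict_space borel (cbox (\<chi> _. a) (\<chi> _. b)))"
    and \<mu>_fin: "emeasure \<mu> (space \<mu>) \<noteq> \<infinity>"
    and f_meas: "\<forall>i\<in>{1..ls L}. (\<lambda>x. f x i) \<in> borel_measurable borel"
    and int_r: "\<forall>r\<ge>1. \<forall>\<theta>. integrable \<mu> (err ls L idx idx0 (act_r R r) f \<theta>)"
    and int_inf: "\<forall>\<theta>. integrable \<mu> (err ls L idx idx0 act_inf f \<theta>)"
    and G_def: "\<forall>\<theta> g gs. (\<forall>r\<ge>1. (loss \<mu> ls L idx idx0 (act_r R r) f has_derivative (\<lambda>h. gs r \<bullet> h)) (at \<theta>))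
                  \<and> (gs \<longlongrightarrow> g) at_top \<longrightarrow> G \<theta> = g"
    and f_const: "\<forall>x\<in>cbox (\<chi> _. a) (\<chi> _. b). \<forall>i\<in>{1..ls L}. f x i = f 0 i"
    and \<gamma>_nonneg: "\<forall>n. \<gamma> n \<ge> 0"
    and \<Theta>_step: "\<forall>n. \<Theta> (Suc n) = \<Theta> n - \<gamma> n *\<^sub>R G (\<Theta> n)"
    and \<gamma>_div: "filterlim (\<lambda>N. \<Sum>n<N. \<gamma> n) at_top sequentially"
    and \<gamma>_small: "bdd_above (range (\<lambda>n. \<gamma> n * measure \<mu> (space \<mu>))) \<and>
       (SUP n. \<gamma> n * measure \<mu> (space \<mu>)) <
         1 / (real L * (max \<bar>a\<bar> (max \<bar>b\<bar> 1))\<^sup>2 * (\<Prod>p=0..L. real (ls p) + 1)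
              * (2 * Vfun ls L idx (f 0) (\<Theta> 0) + 4 * (real L)\<^sup>2 * (\<Sum>i=1..ls L. (f 0 i)\<^sup>2) + 1) ^ (L - 1))"
  shows "bdd_above (range (\<lambda>n. norm (\<Theta> n))) \<and>
         (SUP n. norm (\<Theta> n)) \<le> sqrt (2 * Vfun ls L idx (f 0) (\<Theta> 0) + 4 * (real L)\<^sup>2 * (\<Sum>i=1..ls L. (f 0 i)\<^sup>2))
       \<and> limsup (\<lambda>n. ereal (loss \<mu> ls L idx idx0 act_inf f (\<Theta> n))) = 0"
proof -
  obtain C where "\<forall>r\<ge>1. \<forall>x. \<bar>deriv (R r) x\<bar> \<le> C" using R_deriv_bdd by blast
  then interpret gd_trajectory R AA BB C L ls a b idx idx0 \<mu> f G \<gamma> \<Theta>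
    by unfold_locales (use assms in \<open>simp_all add: Ball_def\<close>)
  have "bdd_above (range (\<lambda>n. norm (\<Theta> n)))" "(SUP n. norm (\<Theta> n)) \<le> sqrt radius_sq"
    using norm_trajectory_le by (auto intro!: bdd_aboveI2 cSUP_least)
  moreover have "(\<lambda>n. ereal (loss \<mu> ls L idx idx0 act_inf f (\<Theta> n))) \<longlonglongrightarrow> ereal 0"
    using relu_loss_tendsto_0 unfolding relu_loss_def by (rule tendsto_ereal)
  then have "limsup (\<lambda>n. ereal (loss \<mu> ls L idx idx0 act_inf f (\<Theta> n))) = 0"
    by (simp add: lim_imp_Limsup zero_ereal_def)
  ultimately show ?thesis unfolding radius_sq_def target_sqnorm_def by blast
qed

end
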